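(* Let $\mathscr{A}$ be a quiver over a nonempty set of vertices $\Lambda$ and let $\sigma\colon \mathscr{A}\otimes\mathscr{A}\to\mathscr{A}\otimes\mathscr{A}$, $\sigma(x,y)=(x\rightharpoonup y,\,x\leftharpoonup y)$, be an involutive left-non-degenerate quiver-theoretic Yang--Baxter map. For $x,y\in\mathscr{A}$ with $\mathfrak{s}(x)=\mathfrak{s}(y)$ put $x\star y:=(x\rightharpoonup\cdot)^{-1}(y)$. Let $j\colon\mathscr{A}\to\mathscr{C}(\sigma)$ send $s\in\mathscr{A}$ to the class of the length-one path $s$. Then $j$ is injective, and the structure category $\mathscr{C}(\sigma)$: (i) satisfies a quadratic isoperimetric inequality with respect to the presentation $\mathscr{C}(\sigma)=\langle \mathscr{A}\mid x|(x\star y)\sim y|(y\star x)\text{ for all }x\neq y\in\mathscr{A}\text{ with }\mathfrak{s}(x)=\mathfrak{s}(y)\rangle^+$; (ii) has no nontrivial invertible elements; (iii) is left-cancellative; (iv) admits unique conditional right-lcms, and the complementation is given by $\star$, i.e. for distinct $x,y\in\mathscr{A}$ with the same source, $j(x)j(x\star y)=j(y)j(y\star x)$ is the right-lcm of $j(x)$ and $j(y)$; (v) is Noetherian; (vi) has as atoms exactly the elements of $j(\mathscr{A})$; (vii) has a Garside family $E$ given by the closure of $j(\mathscr{A})$ under right-lcms, and $E$ is the smallest Garside family of $\mathscr{C}(\sigma)$ containing $j(\mathscr{A})$ and all identity elements.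
   Context: A quiver over $\Lambda$ is a set $\mathscr{A}$ of arrows with source and target maps $\mathfrak{s},\mathfrak{t}\colon\mathscr{A}\to\Lambda$; $\mathscr{A}(\lambda,\Lambda)$ denotes the arrows with source $\lambda$ and $\mathscr{A}(\Lambda,\mu)$ those with target $\mu$. $\mathscr{A}\otimes\mathscr{A}$ is the quiver of composable pairs $(x,y)$ (written $x|y$), $\mathfrak{t}(x)=\mathfrak{s}(y)$, with source $\mathfrak{s}(x)$ and target $\mathfrak{t}(y)$; a morphism of quivers over $\Lambda$ preserves sources and targets. A (quiver-theoretic) Yang--Baxter map is a morphism $\sigma\colon\mathscr{A}\otimes\mathscr{A}\to\mathscr{A}\otimes\mathscr{A}$ of quivers over $\Lambda$ with $(\sigma\otimes\mathrm{id})(\mathrm{id}\otimes\sigma)(\sigma\otimes\mathrm{id})=(\mathrm{id}\otimes\sigma)(\sigma\otimes\mathrm{id})(\mathrm{id}\otimes\sigma)$ on composable triples. It is involutive if $\sigma^2=\mathrm{id}$, and left-non-degenerate if for every $x$ the map $x\rightharpoonup\cdot\colon\mathscr{A}(\mathfrak{t}(x),\Lambda)\to\mathscr{A}(\mathfrak{s}(x),\Lambda)$ is bijective. The structure category $\mathscr{C}(\sigma)$ is the category presented by generators $\mathscr{A}$ and relations $x|y\sim(x\rightharpoonup y)|(x\leftharpoonup y)$ for all composable $x|y$, i.e. the path category of $\mathscr{A}$ modulo the congruence generated by these relations (composition written left to right). In a category, $x$ left-divides $y$ if $y=xz$; a right-lcm of $x,y$ is a common right-multiple $xu=yv$ left-dividing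 every common right-multiple; conditional right-lcms means any two elements with a common right-multiple have a right-lcm. An atom is an element which in every factorization has exactly one non-invertible factor. Noetherian: the proper factor relation ($x\subset y$ iff $y=y'xy''$ with $y'$ or $y''$ non-invertible) is well-founded. A presentation satisfies a quadratic isoperimetric inequality if there is a constant $C$ such that any two paths of lengths $r,s$ representing the same element are connected by at most $C(r+s)^2$ elementary steps each replacing a subpath by the other side of a relation. For a left-cancellative category $\mathscr{C}$ and a subfamily $\mathscr{S}$, let $\mathscr{S}^\sharp=\mathscr{S}\mathscr{C}^\times\cup\mathscr{C}^\times$ ($\mathscr{C}^\times$ the invertible elements); a path $x|y$ is $\mathscr{S}$-greedy if for all $s\in\mathscr{S}$ and $c$ with $\mathfrak{t}(c)=\mathfrak{s}(x)$, $s$ left-divides $cxy$ implies $s$ left-divides $cx$; a path $x_1|\dots|x_r$ is $\mathscr{S}$-normal if all $x_i|x_{i+1}$ are $\mathscr{S}$-greedy and all $x_i\in\mathscr{S}^\sharp$; $\mathscr{S}$ is a Garside family if every element of $\mathscr{C}$ is a product $x_1\cdots x_r$ with $x_1|\dots|x_r$ $\mathscr{S}$-normal. *)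

theory Defs
  imports Complex_Main
begin

text \<open>A quiver-theoretic map sigma on composable pairs is given as a function on pairs;
  x \<rightharpoonup> y = fst (sigma (x,y)), x \<leftharpoonup> y = snd (sigma (x,y)).\<close>

definition quiver :: "'v set \<Rightarrow> 'a set \<Rightarrow> ('a \<Rightarrow> 'v) \<Rightarrow> ('a \<Rightarrow> 'v) \<Rightarrow> bool" where
  "quiver L A s t \<longleftrightarrow> (\<forall>x\<in>A. s x \<in> L \<and> t x \<in> L)"

definition lact :: "('a \<times> 'a \<Rightarrow> 'a \<times> 'a) \<Rightarrow> 'a \<Rightarrow> 'a \<Rightarrow> 'a" where
  "lact \<sigma> x y = fst (\<sigma> (x, y))"

definition ract :: "('a \<times> 'a \<Rightarrow> 'a \<times> 'a) \<Rightarrow> 'a \<Rightarrow> 'a \<Rightarrow> 'a" where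
  "ract \<sigma> x y = snd (\<sigma> (x, y))"

definition composable_pair :: "'a set \<Rightarrow> ('a \<Rightarrow> 'v) \<Rightarrow> ('a \<Rightarrow> 'v) \<Rightarrow> 'a \<Rightarrow> 'a \<Rightarrow> bool" where
  "composable_pair A s t x y \<longleftrightarrow> x \<in> A \<and> y \<in> A \<and> t x = s y"

definition quiver_morphism2 ::
  "'a set \<Rightarrow> ('a \<Rightarrow> 'v) \<Rightarrow> ('a \<Rightarrow> 'v) \<Rightarrow> ('a \<times> 'a \<Rightarrow> 'a \<times> 'a) \<Rightarrow> bool" where
  "quiver_morphism2 A s t \<sigma> \<longleftrightarrow>
     (\<forall>x y. composable_pair A s t x y \<longrightarrow>
        composable_pair A s t (lact \<sigma> x y) (ract \<sigma> x y) \<and>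
        s (lact \<sigma> x y) = s x \<and> t (ract \<sigma> x y) = t y)"

definition sigma12 :: "('a \<times> 'a \<Rightarrow> 'a \<times> 'a) \<Rightarrow> 'a \<times> 'a \<times> 'a \<Rightarrow> 'a \<times> 'a \<times> 'a" where
  "sigma12 \<sigma> p = (case p of (x, y, z) \<Rightarrow> (lact \<sigma> x y, ract \<sigma> x y, z))"

definition sigma23 :: "('a \<times> 'a \<Rightarrow> 'a \<times> 'a) \<Rightarrow> 'a \<times> 'a \<times> 'a \<Rightarrow> 'a \<times> 'a \<times> 'a" where
  "sigma23 \<sigma> p = (case p of (x, y, z) \<Rightarrow> (x, lact \<sigma> y z, ract \<sigma> y z))"

definition yang_baxter_map ::
  "'v set \<Rightarrow> 'a set \<Rightarrow> ('a \<Rightarrow> 'v) \<Rightarrow> ('a \<Rightarrow> 'v) \<Rightarrow> ('a \<times> 'a \<Rightarrow> 'a \<times> 'a) \<Rightarrow> bool" where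
  "yang_baxter_map L A s t \<sigma> \<longleftrightarrow>
     quiver L A s t \<and> quiver_morphism2 A s t \<sigma> \<and>
     (\<forall>x y z. composable_pair A s t x y \<and> composable_pair A s t y z \<longrightarrow>
        sigma12 \<sigma> (sigma23 \<sigma> (sigma12 \<sigma> (x, y, z))) =
        sigma23 \<sigma> (sigma12 \<sigma> (sigma23 \<sigma> (x, y, z))))"

definition involutive ::
  "'a set \<Rightarrow> ('a \<Rightarrow> 'v) \<Rightarrow> ('a \<Rightarrow> 'v) \<Rightarrow> ('a \<times> 'a \<Rightarrow> 'a \<times> 'a) \<Rightarrow> bool" where
  "involutive A s t \<sigma> \<longleftrightarrow> (\<forall>x y. composable_pair A s t x y \<longrightarrow> \<sigma> (\<sigma> (x, y)) = (x, y))"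

definition out_arrows :: "'a set \<Rightarrow> ('a \<Rightarrow> 'v) \<Rightarrow> 'v \<Rightarrow> 'a set" where
  "out_arrows A s v = {y \<in> A. s y = v}"

definition left_nondegenerate ::
  "'a set \<Rightarrow> ('a \<Rightarrow> 'v) \<Rightarrow> ('a \<Rightarrow> 'v) \<Rightarrow> ('a \<times> 'a \<Rightarrow> 'a \<times> 'a) \<Rightarrow> bool" where
  "left_nondegenerate A s t \<sigma> \<longleftrightarrow>
     (\<forall>x\<in>A. bij_betw (lact \<sigma> x) (out_arrows A s (t x)) (out_arrows A s (s x)))"

definition star_op ::
  "'a set \<Rightarrow> ('a \<Rightarrow> 'v) \<Rightarrow> ('a \<Rightarrow> 'v) \<Rightarrow> ('a \<times> 'a \<Rightarrow> 'a \<times> 'a) \<Rightarrow> 'a \<Rightarrow> 'a \<Rightarrow> 'a" where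
  "star_op A s t \<sigma> x y = the_inv_into (out_arrows A s (t x)) (lact \<sigma> x) y"

text \<open>A path is a pair (v, xs): a start vertex v and a list of composable arrows starting at v
  (the empty list gives the empty path at v).\<close>
definition valid_path :: "'v set \<Rightarrow> 'a set \<Rightarrow> ('a \<Rightarrow> 'v) \<Rightarrow> ('a \<Rightarrow> 'v) \<Rightarrow> 'v \<times> 'a list \<Rightarrow> bool" where
  "valid_path L A s t P \<longleftrightarrow> fst P \<in> L \<and> set (snd P) \<subseteq> A \<and>
     (snd P \<noteq> [] \<longrightarrow> s (hd (snd P)) = fst P) \<and>
     (\<forall>i. Suc i < length (snd P) \<longrightarrow> t (snd P ! i) = s (snd P ! Suc i))"

definition path_tgt :: "('a \<Rightarrow> 'v) \<Rightarrow> 'v \<times> 'a list \<Rightarrow> 'v" where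
  "path_tgt t P = (if snd P = [] then fst P else t (last (snd P)))"

definition sigma_step ::
  "'a set \<Rightarrow> ('a \<Rightarrow> 'v) \<Rightarrow> ('a \<Rightarrow> 'v) \<Rightarrow> ('a \<times> 'a \<Rightarrow> 'a \<times> 'a) \<Rightarrow>
   'v \<times> 'a list \<Rightarrow> 'v \<times> 'a list \<Rightarrow> bool" where
  "sigma_step A s t \<sigma> P Q \<longleftrightarrow> fst P = fst Q \<and>
     (\<exists>p q x y. composable_pair A s t x y \<and> snd P = p @ [x, y] @ q \<and>
                snd Q = p @ [lact \<sigma> x y, ract \<sigma> x y] @ q)"

definition path_equiv ::
  "'a set \<Rightarrow> ('a \<Rightarrow> 'v) \<Rightarrow> ('a \<Rightarrow> 'v) \<Rightarrow> ('a \<times> 'a \<Rightarrow> 'a \<times> 'a) \<Rightarrow>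
   'v \<times> 'a list \<Rightarrow> 'v \<times> 'a list \<Rightarrow> bool" where
  "path_equiv A s t \<sigma> = (symclp (sigma_step A s t \<sigma>))\<^sup>*\<^sup>*"

definition path_class ::
  "'a set \<Rightarrow> ('a \<Rightarrow> 'v) \<Rightarrow> ('a \<Rightarrow> 'v) \<Rightarrow> ('a \<times> 'a \<Rightarrow> 'a \<times> 'a) \<Rightarrow>
   'v \<times> 'a list \<Rightarrow> ('v \<times> 'a list) set" where
  "path_class A s t \<sigma> P = {Q. path_equiv A s t \<sigma> P Q}"

text \<open>Small categories given by morphisms, objects, source, target, (left-to-right) composition
  and identities.\<close>
record ('o, 'm) cat =
  cmor :: "'m set"
  cobj :: "'o set"
  csrc :: "'m \<Rightarrow> 'o"
  ctgt :: "'m \<Rightarrow> 'o"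
  cmul :: "'m \<Rightarrow> 'm \<Rightarrow> 'm"
  cid :: "'o \<Rightarrow> 'm"

definition structure_cat ::
  "'v set \<Rightarrow> 'a set \<Rightarrow> ('a \<Rightarrow> 'v) \<Rightarrow> ('a \<Rightarrow> 'v) \<Rightarrow> ('a \<times> 'a \<Rightarrow> 'a \<times> 'a) \<Rightarrow>
   ('v, ('v \<times> 'a list) set) cat" where
  "structure_cat L A s t \<sigma> =
    \<lparr> cmor = {path_class A s t \<sigma> P | P. valid_path L A s t P},
      cobj = L,
      csrc = (\<lambda>c. fst (SOME P. P \<in> c)),
      ctgt = (\<lambda>c. path_tgt t (SOME P. P \<in> c)),
      cmul = (\<lambda>c d. path_class A s t \<sigma>
                 (fst (SOME P. P \<in> c), snd (SOME P. P \<in> c) @ snd (SOME Q. Q \<in> d))),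
      cid = (\<lambda>v. path_class A s t \<sigma> (v, [])) \<rparr>"

definition jmap ::
  "'a set \<Rightarrow> ('a \<Rightarrow> 'v) \<Rightarrow> ('a \<Rightarrow> 'v) \<Rightarrow> ('a \<times> 'a \<Rightarrow> 'a \<times> 'a) \<Rightarrow> 'a \<Rightarrow> ('v \<times> 'a list) set" where
  "jmap A s t \<sigma> x = path_class A s t \<sigma> (s x, [x])"

definition composable :: "('o, 'm, 'z) cat_scheme \<Rightarrow> 'm \<Rightarrow> 'm \<Rightarrow> bool" where
  "composable C x y \<longleftrightarrow> ctgt C x = csrc C y"

definition invertible :: "('o, 'm, 'z) cat_scheme \<Rightarrow> 'm \<Rightarrow> bool" where
  "invertible C x \<longleftrightarrow> x \<in> cmor C \<and>
     (\<exists>y\<in>cmor C. composable C x y \<and> composable C y x \<and>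
        cmul C x y = cid C (csrc C x) \<and> cmul C y x = cid C (ctgt C x))"

definition is_identity :: "('o, 'm, 'z) cat_scheme \<Rightarrow> 'm \<Rightarrow> bool" where
  "is_identity C x \<longleftrightarrow> (\<exists>v\<in>cobj C. x = cid C v)"

definition left_divides :: "('o, 'm, 'z) cat_scheme \<Rightarrow> 'm \<Rightarrow> 'm \<Rightarrow> bool" where
  "left_divides C x y \<longleftrightarrow> x \<in> cmor C \<and> y \<in> cmor C \<and>
     (\<exists>z\<in>cmor C. composable C x z \<and> y = cmul C x z)"

definition common_right_multiple :: "('o, 'm, 'z) cat_scheme \<Rightarrow> 'm \<Rightarrow> 'm \<Rightarrow> 'm \<Rightarrow> bool" where
  "common_right_multiple C x y m \<longleftrightarrow> left_divides C x m \<and> left_divides C y m"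

definition is_right_lcm :: "('o, 'm, 'z) cat_scheme \<Rightarrow> 'm \<Rightarrow> 'm \<Rightarrow> 'm \<Rightarrow> bool" where
  "is_right_lcm C x y m \<longleftrightarrow> common_right_multiple C x y m \<and>
     (\<forall>w. common_right_multiple C x y w \<longrightarrow> left_divides C m w)"

definition left_cancellative :: "('o, 'm, 'z) cat_scheme \<Rightarrow> bool" where
  "left_cancellative C \<longleftrightarrow> (\<forall>x\<in>cmor C. \<forall>y\<in>cmor C. \<forall>z\<in>cmor C.
     composable C x y \<and> composable C x z \<and> cmul C x y = cmul C x z \<longrightarrow> y = z)"

definition unique_conditional_right_lcms :: "('o, 'm, 'z) cat_scheme \<Rightarrow> bool" where
  "unique_conditional_right_lcms C \<longleftrightarrow> (\<forall>x\<in>cmor C. \<forall>y\<in>cmor C.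
     (\<exists>m. common_right_multiple C x y m) \<longrightarrow> (\<exists>!m. is_right_lcm C x y m))"

definition proper_factor :: "('o, 'm, 'z) cat_scheme \<Rightarrow> 'm \<Rightarrow> 'm \<Rightarrow> bool" where
  "proper_factor C x y \<longleftrightarrow> x \<in> cmor C \<and> y \<in> cmor C \<and>
     (\<exists>y'\<in>cmor C. \<exists>y''\<in>cmor C. composable C y' x \<and> composable C x y'' \<and>
        y = cmul C (cmul C y' x) y'' \<and> (\<not> invertible C y' \<or> \<not> invertible C y''))"

definition noetherian :: "('o, 'm, 'z) cat_scheme \<Rightarrow> bool" where
  "noetherian C \<longleftrightarrow> wfp (proper_factor C)"

definition is_chain :: "('o, 'm, 'z) cat_scheme \<Rightarrow> 'm list \<Rightarrow> bool" where
  "is_chain C xs \<longleftrightarrow> set xs \<subseteq> cmor C \<and>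
     (\<forall>i. Suc i < length xs \<longrightarrow> composable C (xs ! i) (xs ! Suc i))"

definition list_prod :: "('o, 'm, 'z) cat_scheme \<Rightarrow> 'm list \<Rightarrow> 'm" where
  "list_prod C xs = foldl (cmul C) (hd xs) (tl xs)"

definition atom :: "('o, 'm, 'z) cat_scheme \<Rightarrow> 'm \<Rightarrow> bool" where
  "atom C x \<longleftrightarrow> x \<in> cmor C \<and>
     (\<forall>xs. xs \<noteq> [] \<and> is_chain C xs \<and> list_prod C xs = x \<longrightarrow>
        length (filter (\<lambda>y. \<not> invertible C y) xs) = 1)"

definition sharp :: "('o, 'm, 'z) cat_scheme \<Rightarrow> 'm set \<Rightarrow> 'm set" where
  "sharp C S = {cmul C x e | x e. x \<in> S \<and> invertible C e \<and> composable C x e}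
               \<union> {e. invertible C e}"

definition greedy :: "('o, 'm, 'z) cat_scheme \<Rightarrow> 'm set \<Rightarrow> 'm \<Rightarrow> 'm \<Rightarrow> bool" where
  "greedy C S x y \<longleftrightarrow> (\<forall>u\<in>S. \<forall>c\<in>cmor C. composable C c x \<longrightarrow>
     left_divides C u (cmul C (cmul C c x) y) \<longrightarrow> left_divides C u (cmul C c x))"

definition normal_path :: "('o, 'm, 'z) cat_scheme \<Rightarrow> 'm set \<Rightarrow> 'm list \<Rightarrow> bool" where
  "normal_path C S xs \<longleftrightarrow> is_chain C xs \<and> set xs \<subseteq> sharp C S \<and>
     (\<forall>i. Suc i < length xs \<longrightarrow> greedy C S (xs ! i) (xs ! Suc i))"

definition garside_family :: "('o, 'm, 'z) cat_scheme \<Rightarrow> 'm set \<Rightarrow> bool" where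
  "garside_family C S \<longleftrightarrow> S \<subseteq> cmor C \<and>
     (\<forall>x\<in>cmor C. \<exists>xs. xs \<noteq> [] \<and> normal_path C S xs \<and> list_prod C xs = x)"

inductive_set rlcm_closure :: "('o, 'm, 'z) cat_scheme \<Rightarrow> 'm set \<Rightarrow> 'm set"
  for C :: "('o, 'm, 'z) cat_scheme" and X :: "'m set" where
  base: "x \<in> X \<Longrightarrow> x \<in> rlcm_closure C X"
| lcm: "a \<in> rlcm_closure C X \<Longrightarrow> b \<in> rlcm_closure C X \<Longrightarrow> is_right_lcm C a b m \<Longrightarrow>
        m \<in> rlcm_closure C X"

definition star_step ::
  "'a set \<Rightarrow> ('a \<Rightarrow> 'v) \<Rightarrow> ('a \<Rightarrow> 'v) \<Rightarrow> ('a \<times> 'a \<Rightarrow> 'a \<times> 'a) \<Rightarrow>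
   'v \<times> 'a list \<Rightarrow> 'v \<times> 'a list \<Rightarrow> bool" where
  "star_step A s t \<sigma> P Q \<longleftrightarrow> fst P = fst Q \<and>
     (\<exists>p q x y. x \<in> A \<and> y \<in> A \<and> x \<noteq> y \<and> s x = s y \<and>
        snd P = p @ [x, star_op A s t \<sigma> x y] @ q \<and>
        snd Q = p @ [y, star_op A s t \<sigma> y x] @ q)"

end

theory Submission
  imports Defs
begin

text \<open>The complement \<open>x \<star> y\<close> inverts the left action, and involutivity together with the braid
  relation yields the cube condition \<open>(x \<star> y) \<star> (x \<star> z) = (y \<star> x) \<star> (y \<star> z)\<close>.  With it one
  shows, by induction on the length and along chains of elementary moves, that equivalent paths
  \<open>x|u\<close> and \<open>y|v\<close> with \<open>x \<noteq> y\<close> satisfy \<open>u \<approx> (x \<star> y)|w\<close> and \<open>v \<approx> (y \<star> x)|w\<close> for a common \<open>w\<close>.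
  This single fact gives left cancellativity, right-lcms computed by \<open>\<star>\<close>, and the quadratic
  isoperimetric inequality: the first letter is moved into place by at most \<open>length u\<close> relations
  \<open>x|(x \<star> y) \<sim> y|(y \<star> x)\<close> and then cancelled.  The relations preserve length, which is therefore
  additive on \<open>\<C>(\<sigma>)\<close>: there are no nontrivial invertible elements, \<open>\<C>(\<sigma>)\<close> is Noetherian and its
  atoms are the arrows.  Finally, the right-lcm closure \<open>E\<close> of arrows and identities is closed
  under complement (the right-lcm of \<open>u \<in> E\<close> and \<open>c\<close> is \<open>c u'\<close> with \<open>u' \<in> E\<close>), so the longest
  divisor in \<open>E\<close> of an element is divisible by all its divisors in \<open>E\<close>.  These heads give greedy
  normal forms, and in any Garside family containing arrows and identities the right-lcm of two
  of its elements is the head of its own normal form, hence again in the family.\<close>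

lemma successively_conv_nth:
  "successively R xs \<longleftrightarrow> (\<forall>i. Suc i < length xs \<longrightarrow> R (xs ! i) (xs ! Suc i))"
  by (induction R xs rule: successively.induct) (auto simp: nth_Cons split: nat.splits)

lemma length_filter_eq_1_if_sum_list_eq_1:
  fixes f :: "'b \<Rightarrow> nat"
  assumes "sum_list (map f xs) = 1"
  shows "length (filter (\<lambda>y. f y \<noteq> 0) xs) = 1"
  using assms
proof (induction xs)
  case (Cons x xs)
  show ?case
  proof (cases "f x = 0")
    case False
    have "f x + sum_list (map f xs) = 1"
      using Cons.prems by simp
    then have "sum_list (map f xs) = 0"
      using False by linarith
    then show ?thesis
      using False by (simp add: filter_empty_conv sum_list_eq_0_iff)
  qed (use Cons in simp)
qed simp

locale involutive_ybm =
  fixes L :: "'v set" and A :: "'a set" and s t :: "'a \<Rightarrow> 'v"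
    and \<sigma> :: "'a \<times> 'a \<Rightarrow> 'a \<times> 'a"
  assumes yang_baxter: "yang_baxter_map L A s t \<sigma>"
    and involutive: "involutive A s t \<sigma>"
    and left_nondegenerate: "left_nondegenerate A s t \<sigma>"
begin

abbreviation left_action (infixr "\<rightharpoonup>" 75) where "left_action \<equiv> lact \<sigma>"
abbreviation right_action (infixl "\<leftharpoonup>" 75) where "right_action \<equiv> ract \<sigma>"
abbreviation complement (infixl "\<star>" 80) where "complement \<equiv> star_op A s t \<sigma>"

lemma src_in_L: "x \<in> A \<Longrightarrow> s x \<in> L" and tgt_in_L: "x \<in> A \<Longrightarrow> t x \<in> L"
  using yang_baxter unfolding yang_baxter_map_def quiver_def by blast+

lemma sigma_arrows:
  assumes "x \<in> A" "y \<in> A" "t x = s y"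
  shows "x \<rightharpoonup> y \<in> A" "x \<leftharpoonup> y \<in> A" "t (x \<rightharpoonup> y) = s (x \<leftharpoonup> y)"
    and "s (x \<rightharpoonup> y) = s x" "t (x \<leftharpoonup> y) = t y"
  using yang_baxter assms
  unfolding yang_baxter_map_def quiver_morphism2_def composable_pair_def by blast+

lemma bij_betw_left_action:
  "x \<in> A \<Longrightarrow> bij_betw (left_action x) (out_arrows A s (t x)) (out_arrows A s (s x))"
  using left_nondegenerate unfolding left_nondegenerate_def by blast

lemma
  assumes "x \<in> A" "y \<in> A" "s y = s x"
  shows complement_in_A: "x \<star> y \<in> A"
    and src_complement: "s (x \<star> y) = t x"
    and left_action_complement: "x \<rightharpoonup> (x \<star> y) = y"
proof -
  have y: "y \<in> out_arrows A s (s x)"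
    using assms unfolding out_arrows_def by blast
  note bij = bij_betw_left_action[OF assms(1)]
  have "x \<star> y \<in> out_arrows A s (t x)"
    unfolding star_op_def using the_inv_into_into[OF bij_betw_imp_inj_on[OF bij]] bij y
    by (metis bij_betw_def order_refl)
  then show "x \<star> y \<in> A" "s (x \<star> y) = t x"
    unfolding out_arrows_def by auto
  show "x \<rightharpoonup> (x \<star> y) = y"
    unfolding star_op_def using f_the_inv_into_f[OF bij_betw_imp_inj_on[OF bij]] bij y
    by (metis bij_betw_def)
qed

lemma complement_left_action:
  assumes "x \<in> A" "b \<in> A" "s b = t x"
  shows "x \<star> (x \<rightharpoonup> b) = b"
proof -
  have "b \<in> out_arrows A s (t x)"
    using assms unfolding out_arrows_def by blast
  then show ?thesis
    unfolding star_op_def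
    using the_inv_into_f_f[OF bij_betw_imp_inj_on[OF bij_betw_left_action[OF assms(1)]]] by blast
qed

lemma left_action_involutive:
  assumes "x \<in> A" "b \<in> A" "t x = s b"
  shows "(x \<rightharpoonup> b) \<rightharpoonup> (x \<leftharpoonup> b) = x"
proof -
  have "\<sigma> (\<sigma> (x, b)) = (x, b)"
    using involutive assms unfolding involutive_def composable_pair_def by blast
  then show ?thesis
    unfolding lact_def ract_def by simp
qed

text \<open>Involutivity turns the second component of \<open>\<sigma>(x, x \<star> y)\<close> into the complement the other
  way round; this is why \<open>x|(x \<star> y) \<sim> y|(y \<star> x)\<close> is a defining relation.\<close>
lemma right_action_complement:
  assumes "x \<in> A" "y \<in> A" "s y = s x"
  shows "x \<leftharpoonup> (x \<star> y) = y \<star> x"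
proof -
  have xy: "x \<star> y \<in> A" "t x = s (x \<star> y)"
    using complement_in_A[OF assms] src_complement[OF assms] by auto
  have "y \<rightharpoonup> (x \<leftharpoonup> (x \<star> y)) = x"
    using left_action_involutive[OF assms(1) xy] left_action_complement[OF assms] by simp
  moreover have "x \<leftharpoonup> (x \<star> y) \<in> A" "s (x \<leftharpoonup> (x \<star> y)) = t y"
    using sigma_arrows[OF assms(1) xy] left_action_complement[OF assms] by auto
  ultimately show ?thesis
    using complement_left_action[OF assms(2)] by metis
qed

lemma yang_baxter_left_action:
  assumes "x \<in> A" "y \<in> A" "z \<in> A" "t x = s y" "t y = s z"
  shows "x \<rightharpoonup> (y \<rightharpoonup> z) = (x \<rightharpoonup> y) \<rightharpoonup> ((x \<leftharpoonup> y) \<rightharpoonup> z)"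
proof -
  have "sigma12 \<sigma> (sigma23 \<sigma> (sigma12 \<sigma> (x, y, z))) = sigma23 \<sigma> (sigma12 \<sigma> (sigma23 \<sigma> (x, y, z)))"
    using yang_baxter assms unfolding yang_baxter_map_def composable_pair_def by blast
  then show ?thesis
    unfolding sigma12_def sigma23_def by simp
qed

text \<open>The cube condition for the complement, read off from the first component of the
  braid relation applied to \<open>x|(x \<star> y)|((x \<star> y) \<star> (x \<star> z))\<close>.\<close>
lemma complement_cube:
  assumes "x \<in> A" "y \<in> A" "z \<in> A" "s y = s x" "s z = s x"
  shows "(x \<star> y) \<star> (x \<star> z) = (y \<star> x) \<star> (y \<star> z)"
proof -
  define a b where "a = x \<star> y" and "b = x \<star> z"
  define c where "c = a \<star> b"
  have a: "a \<in> A" "s a = t x" "x \<rightharpoonup> a = y"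
    using complement_in_A[OF assms(1,2,4)] src_complement[OF assms(1,2,4)]
      left_action_complement[OF assms(1,2,4)] a_def by auto
  have b: "b \<in> A" "s b = t x" "x \<rightharpoonup> b = z"
    using complement_in_A[OF assms(1,3,5)] src_complement[OF assms(1,3,5)]
      left_action_complement[OF assms(1,3,5)] b_def by auto
  have c: "c \<in> A" "s c = t a" "a \<rightharpoonup> c = b"
    using complement_in_A[OF a(1) b(1)] src_complement[OF a(1) b(1)]
      left_action_complement[OF a(1) b(1)] a(2) b(2) c_def by auto
  have yx: "y \<star> x \<in> A" "s (y \<star> x) = t y"
    using complement_in_A[OF assms(2,1)] src_complement[OF assms(2,1)] assms(4) by auto
  have ra: "x \<leftharpoonup> a = y \<star> x"
    using right_action_complement[OF assms(1,2,4)] a_def by simp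
  have tc: "t (y \<star> x) = s c"
    using sigma_arrows(5)[OF assms(1) a(1)] a(2) c(2) ra by simp
  have "y \<rightharpoonup> ((y \<star> x) \<rightharpoonup> c) = z"
    using yang_baxter_left_action[OF assms(1) a(1) c(1) a(2)[symmetric] c(2)[symmetric]]
    by (simp add: a(3) b(3) c(3) ra)
  moreover have "(y \<star> x) \<rightharpoonup> c \<in> A" "s ((y \<star> x) \<rightharpoonup> c) = t y"
    using sigma_arrows[OF yx(1) c(1) tc] yx(2) by auto
  ultimately have "y \<star> z = (y \<star> x) \<rightharpoonup> c"
    using complement_left_action[OF assms(2)] by metis
  then show ?thesis
    using complement_left_action[OF yx(1) c(1) tc[symmetric]] c_def a_def b_def by simp
qed

lemma complement_inj:
  assumes "x \<in> A" "y \<in> A" "z \<in> A" "s y = s x" "s z = s x" "x \<star> y = x \<star> z"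
  shows "y = z"
  using left_action_complement[OF assms(1,2,4)] left_action_complement[OF assms(1,3,5)] assms(6)
  by metis

section \<open>Paths and the word problem\<close>

primrec path_from :: "'v \<Rightarrow> 'a list \<Rightarrow> bool" where
  "path_from v [] \<longleftrightarrow> True"
| "path_from v (x # xs) \<longleftrightarrow> x \<in> A \<and> s x = v \<and> path_from (t x) xs"

primrec path_end :: "'v \<Rightarrow> 'a list \<Rightarrow> 'v" where
  "path_end v [] = v"
| "path_end v (x # xs) = path_end (t x) xs"

definition is_path :: "'a list \<Rightarrow> bool" where
  "is_path xs \<longleftrightarrow> path_from (s (hd xs)) xs"

lemma is_path_Nil [simp]: "is_path []"
  unfolding is_path_def by simp

lemma is_path_Cons [simp]: "is_path (x # xs) \<longleftrightarrow> x \<in> A \<and> path_from (t x) xs"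
  unfolding is_path_def by simp

lemma is_path_if_path_from: "path_from v xs \<Longrightarrow> is_path xs"
  by (cases xs) auto

lemma path_from_append [simp]:
  "path_from v (xs @ ys) \<longleftrightarrow> path_from v xs \<and> path_from (path_end v xs) ys"
  by (induction xs arbitrary: v) auto

lemma path_end_append [simp]: "path_end v (xs @ ys) = path_end (path_end v xs) ys"
  by (induction xs arbitrary: v) auto

lemma path_end_in_L: "v \<in> L \<Longrightarrow> path_from v xs \<Longrightarrow> path_end v xs \<in> L"
  by (induction xs arbitrary: v) (auto simp: tgt_in_L)

lemma path_from_conv_nth:
  "path_from v xs \<longleftrightarrow> set xs \<subseteq> A \<and> (xs \<noteq> [] \<longrightarrow> s (hd xs) = v) \<and>
     (\<forall>i. Suc i < length xs \<longrightarrow> t (xs ! i) = s (xs ! Suc i))"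
proof -
  have "path_from v xs \<longleftrightarrow> set xs \<subseteq> A \<and> (xs \<noteq> [] \<longrightarrow> s (hd xs) = v) \<and>
      successively (\<lambda>x y. t x = s y) xs"
    by (induction xs arbitrary: v) (auto simp: successively_Cons)
  then show ?thesis
    by (simp add: successively_conv_nth)
qed

lemma valid_path_iff: "valid_path L A s t (v, xs) \<longleftrightarrow> v \<in> L \<and> path_from v xs"
  unfolding valid_path_def path_from_conv_nth by auto

lemma path_tgt_eq_path_end: "path_tgt t (v, xs) = path_end v xs"
  unfolding path_tgt_def by (induction xs arbitrary: v) auto

definition sigma_move :: "'a list \<Rightarrow> 'a list \<Rightarrow> bool" where
  "sigma_move xs ys \<longleftrightarrow> (\<exists>p q x y. x \<in> A \<and> y \<in> A \<and> t x = s y \<and>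
     xs = p @ [x, y] @ q \<and> ys = p @ [x \<rightharpoonup> y, x \<leftharpoonup> y] @ q)"

abbreviation word_equiv (infix "\<approx>" 50) where "word_equiv \<equiv> equivclp sigma_move"

lemma sigma_move_append: "sigma_move xs ys \<Longrightarrow> sigma_move (p @ xs @ q) (p @ ys @ q)"
  unfolding sigma_move_def by (metis append.assoc)

lemma word_equiv_append: "xs \<approx> ys \<Longrightarrow> p @ xs @ q \<approx> p @ ys @ q"
  by (induction rule: equivclp_induct) (auto intro: equivclp_into_equivclp sigma_move_append)

lemma word_equiv_Cons: "xs \<approx> ys \<Longrightarrow> a # xs \<approx> a # ys"
  using word_equiv_append[of xs ys "[a]" "[]"] by simp

lemma word_equiv_append_left: "xs \<approx> ys \<Longrightarrow> p @ xs \<approx> p @ ys"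
  using word_equiv_append[of xs ys p "[]"] by simp

lemma word_equiv_append_right: "xs \<approx> ys \<Longrightarrow> xs @ q \<approx> ys @ q"
  using word_equiv_append[of xs ys "[]" q] by simp

lemma word_equiv_append_both: "xs \<approx> xs' \<Longrightarrow> ys \<approx> ys' \<Longrightarrow> xs @ ys \<approx> xs' @ ys'"
  using word_equiv_append_left word_equiv_append_right equivclp_trans by metis

lemma word_equiv_invariant:
  assumes "\<And>xs ys. sigma_move xs ys \<Longrightarrow> f xs = f ys" and "xs \<approx> ys"
  shows "f xs = f ys"
  using assms(2) by (induction rule: equivclp_induct) (auto dest: assms(1))

lemma word_equiv_length: "xs \<approx> ys \<Longrightarrow> length xs = length ys"
  by (rule word_equiv_invariant) (auto simp: sigma_move_def)

lemma word_equiv_path_end: "xs \<approx> ys \<Longrightarrow> path_end v xs = path_end v ys"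
  by (rule word_equiv_invariant) (auto simp: sigma_move_def sigma_arrows(5))

lemma word_equiv_path_from: "xs \<approx> ys \<Longrightarrow> path_from v xs = path_from v ys"
proof (rule word_equiv_invariant)
  fix xs ys assume "sigma_move xs ys"
  then obtain p q x y where xy: "x \<in> A" "y \<in> A" "t x = s y"
    and xs: "xs = p @ [x, y] @ q" and ys: "ys = p @ [x \<rightharpoonup> y, x \<leftharpoonup> y] @ q"
    unfolding sigma_move_def by blast
  show "path_from v xs = path_from v ys"
    unfolding xs ys using sigma_arrows[OF xy] xy by auto
qed

lemma word_equiv_is_path: "xs \<approx> ys \<Longrightarrow> is_path xs \<Longrightarrow> is_path ys"
  using word_equiv_path_from is_path_if_path_from unfolding is_path_def by blast

lemma word_equiv_src_hd: "x # xs \<approx> y # ys \<Longrightarrow> is_path (x # xs) \<Longrightarrow> s y = s x"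
  using word_equiv_path_from[of "x # xs" "y # ys" "s x"] by simp

lemma complement_swap:
  assumes "x \<in> A" "y \<in> A" "s y = s x"
  shows "x # x \<star> y # q \<approx> y # y \<star> x # q"
proof -
  have "sigma_move (x # x \<star> y # q) (x \<rightharpoonup> (x \<star> y) # x \<leftharpoonup> (x \<star> y) # q)"
    unfolding sigma_move_def
    by (intro exI[of _ "[]"] exI[of _ q] exI[of _ x] exI[of _ "x \<star> y"])
      (simp add: assms complement_in_A[OF assms] src_complement[OF assms])
  then show ?thesis
    using left_action_complement[OF assms] right_action_complement[OF assms] by auto
qed

definition complemented_tails :: "'a \<Rightarrow> 'a list \<Rightarrow> 'a \<Rightarrow> 'a list \<Rightarrow> bool" where
  "complemented_tails x u y v \<longleftrightarrow>
     (if x = y then u \<approx> v else \<exists>w. u \<approx> x \<star> y # w \<and> v \<approx> y \<star> x # w)"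

lemma complemented_tails_sym: "complemented_tails x u y v \<Longrightarrow> complemented_tails y v x u"
  unfolding complemented_tails_def by (cases "x = y") (simp_all add: equivclp_sym, blast)

lemma complemented_tails_equiv:
  "complemented_tails x u y v \<Longrightarrow> u' \<approx> u \<Longrightarrow> v \<approx> v' \<Longrightarrow> complemented_tails x u' y v'"
  unfolding complemented_tails_def
  by (cases "x = y") (simp_all, (meson equivclp_sym equivclp_trans)+)

lemma complemented_tails_sigma_move:
  assumes path: "is_path (x # u)" and move: "sigma_move (x # u) (y # v)"
  shows "complemented_tails x u y v"
proof -
  obtain p q a b where ab: "a \<in> A" "b \<in> A" "t a = s b"
    and xu: "x # u = p @ [a, b] @ q" and yv: "y # v = p @ [a \<rightharpoonup> b, a \<leftharpoonup> b] @ q"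
    using move unfolding sigma_move_def by blast
  show ?thesis
  proof (cases p)
    case Nil
    then have xy: "x = a" "u = b # q" "y = a \<rightharpoonup> b" "v = a \<leftharpoonup> b # q"
      using xu yv by auto
    have b: "a \<star> (a \<rightharpoonup> b) = b"
      using complement_left_action[OF ab(1,2) ab(3)[symmetric]] .
    show ?thesis
    proof (cases "y = x")
      case True
      then have "a \<star> (a \<rightharpoonup> (a \<leftharpoonup> b)) = b"
        using b xy left_action_involutive[OF ab] by simp
      then have "a \<leftharpoonup> b = b"
        using complement_left_action[OF ab(1) sigma_arrows(2)[OF ab]] sigma_arrows(3,4)[OF ab] xy True
        by simp
      then show ?thesis
        unfolding complemented_tails_def using xy True by simp
    next
      case False
      have "a \<leftharpoonup> b = y \<star> x"
        using right_action_complement[OF ab(1) sigma_arrows(1)[OF ab] sigma_arrows(4)[OF ab]] b xy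
        by simp
      then have "u \<approx> x \<star> y # q" "v \<approx> y \<star> x # q"
        using xy b by simp_all
      then show ?thesis
        unfolding complemented_tails_def using False by auto
    qed
  next
    case (Cons c p')
    then have "x = y" "u = p' @ [a, b] @ q" "v = p' @ [a \<rightharpoonup> b, a \<leftharpoonup> b] @ q"
      using xu yv by auto
    moreover have "sigma_move u v"
      unfolding sigma_move_def calculation using ab by blast
    ultimately show ?thesis
      unfolding complemented_tails_def by auto
  qed
qed

text \<open>The cube condition is exactly what makes the complement data compose along three
  pairwise distinct heads \<open>x, y, z\<close>.\<close>
lemma complemented_tails_compose:
  assumes "x \<in> A" "y \<in> A" "z \<in> A" "s y = s x" "s z = s x" "x \<noteq> y" "y \<noteq> z"
    and u: "u \<approx> x \<star> y # w1" and w: "w \<approx> z \<star> y # w2"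
    and tails: "complemented_tails (y \<star> x) w1 (y \<star> z) w2"
  shows "complemented_tails x u z w"
proof (cases "x = z")
  case True
  then have "w1 \<approx> w2"
    using tails unfolding complemented_tails_def by simp
  then have "u \<approx> w"
    using u w True by (meson equivclp_sym equivclp_trans word_equiv_Cons)
  then show ?thesis
    unfolding complemented_tails_def using True by simp
next
  case False
  have "y \<star> x \<noteq> y \<star> z"
    using complement_inj[OF assms(2,1,3)] assms(4,5) False by auto
  then obtain w4 where w4: "w1 \<approx> (y \<star> x) \<star> (y \<star> z) # w4" "w2 \<approx> (y \<star> z) \<star> (y \<star> x) # w4"
    using tails unfolding complemented_tails_def by auto
  have xyz: "x \<star> y \<in> A" "s (x \<star> y) = t x" "x \<star> z \<in> A" "s (x \<star> z) = t x"
    using complement_in_A src_complement assms(1-5) by auto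
  have zyx: "z \<star> y \<in> A" "s (z \<star> y) = t z" "z \<star> x \<in> A" "s (z \<star> x) = t z"
    using complement_in_A src_complement assms(1-5) by auto
  have "u \<approx> x \<star> y # (x \<star> y) \<star> (x \<star> z) # w4"
    using u word_equiv_Cons[OF w4(1)] complement_cube[OF assms(1-5)] by (metis equivclp_trans)
  also have "\<dots> \<approx> x \<star> z # (x \<star> z) \<star> (x \<star> y) # w4"
    using complement_swap[OF xyz(1,3)] xyz by simp
  finally have U: "u \<approx> x \<star> z # (z \<star> x) \<star> (z \<star> y) # w4"
    using complement_cube[OF assms(1,3,2,5,4)] by simp
  have "w \<approx> z \<star> y # (z \<star> y) \<star> (z \<star> x) # w4"
    using w word_equiv_Cons[OF w4(2)] complement_cube[OF assms(3,2,1)] assms(4,5)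
    by (metis equivclp_trans)
  also have "\<dots> \<approx> z \<star> x # (z \<star> x) \<star> (z \<star> y) # w4"
    using complement_swap[OF zyx(1,3)] zyx by simp
  finally show ?thesis
    unfolding complemented_tails_def using U False by auto
qed

lemma complemented_tails_trans:
  assumes IH: "\<And>a b c d. length b < length v \<Longrightarrow> is_path (a # b) \<Longrightarrow> a # b \<approx> c # d \<Longrightarrow>
      complemented_tails a b c d"
    and paths: "is_path (x # u)" "is_path (y # v)" "is_path (z # w)"
    and src: "s y = s x" "s z = s x"
    and xy: "complemented_tails x u y v" and yz: "complemented_tails y v z w"
  shows "complemented_tails x u z w"
proof (cases "x = y \<or> y = z")
  case True
  then show ?thesis
  proof
    assume "x = y"
    then have "u \<approx> v"
      using xy unfolding complemented_tails_def by simp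
    then show ?thesis
      using complemented_tails_equiv[OF yz] \<open>x = y\<close> by simp
  next
    assume "y = z"
    then have "v \<approx> w"
      using yz unfolding complemented_tails_def by simp
    then show ?thesis
      using complemented_tails_equiv[OF xy] \<open>y = z\<close> by simp
  qed
next
  case False
  then obtain w1 w2 where w1: "u \<approx> x \<star> y # w1" "v \<approx> y \<star> x # w1"
    and w2: "v \<approx> y \<star> z # w2" "w \<approx> z \<star> y # w2"
    using xy yz unfolding complemented_tails_def by auto
  have "complemented_tails (y \<star> x) w1 (y \<star> z) w2"
  proof (rule IH)
    show "length w1 < length v"
      using word_equiv_length[OF w1(2)] by simp
    show "is_path (y \<star> x # w1)"
      using word_equiv_is_path[OF w1(2)] paths(2) is_path_if_path_from by auto
    show "y \<star> x # w1 \<approx> y \<star> z # w2"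
      using w1(2) w2(1) by (meson equivclp_sym equivclp_trans)
  qed
  then show ?thesis
    using complemented_tails_compose[of x y z u w1 w w2] paths src False w1(1) w2(2) by simp
qed

text \<open>The outer induction is on the length of \<open>u\<close>, the inner one along the chain of elementary
  moves starting at \<open>x # u\<close>; composing two complement steps compares strictly shorter tails, which
  is where the outer hypothesis enters.\<close>
theorem word_equiv_Cons_complemented_tails:
  assumes "is_path (x # u)" "x # u \<approx> y # v"
  shows "complemented_tails x u y v"
  using assms
proof (induction "length u" arbitrary: x u y v rule: less_induct)
  case less
  have "complemented_tails x u y' v'" if "x # u \<approx> V" "V = y' # v'" for V y' v'
    using that
  proof (induction arbitrary: y' v' rule: equivclp_induct)
    case base
    then show ?case
      unfolding complemented_tails_def by simp
  next
    case (step V W)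
    have xV: "x # u \<approx> V"
      by fact
    have xW: "x # u \<approx> W"
      using equivclp_into_equivclp[OF step.hyps] .
    obtain y1 v1 where V: "V = y1 # v1"
      using word_equiv_length[OF xV] word_equiv_length[OF xW] step.prems by (cases V) auto
    have paths: "is_path V" "is_path W"
      using word_equiv_is_path[OF xV less.prems(1)] word_equiv_is_path[OF xW less.prems(1)] .
    have "complemented_tails y1 v1 y' v'"
      using step.hyps(2)
    proof
      assume "sigma_move V W"
      then show ?thesis
        using complemented_tails_sigma_move paths(1) V step.prems by simp
    next
      assume "sigma_move W V"
      then show ?thesis
        using complemented_tails_sym complemented_tails_sigma_move paths(2) V step.prems by simp
    qed
    moreover have "length v1 = length u"
      using word_equiv_length[OF xV] V by simp
    moreover have "s y1 = s x" "s y' = s x"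
      using word_equiv_src_hd[OF xV[unfolded V] less.prems(1)]
        word_equiv_src_hd[OF xW[unfolded step.prems] less.prems(1)] .
    ultimately show ?case
      using complemented_tails_trans[of v1 x u y1 y' v'] less.hyps less.prems(1) step.IH[OF V]
        paths V step.prems by simp
  qed
  then show ?case
    using less.prems(2) by blast
qed

corollary word_equiv_Cons_cancel: "is_path (x # u) \<Longrightarrow> x # u \<approx> x # v \<Longrightarrow> u \<approx> v"
  using word_equiv_Cons_complemented_tails unfolding complemented_tails_def by simp

corollary word_equiv_append_cancel: "is_path (p @ u) \<Longrightarrow> p @ u \<approx> p @ v \<Longrightarrow> u \<approx> v"
proof (induction p)
  case (Cons a p)
  then have "is_path (p @ u)"
    using is_path_if_path_from by auto
  moreover have "p @ u \<approx> p @ v"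
    using word_equiv_Cons_cancel Cons.prems by simp
  ultimately show ?case
    using Cons.IH by blast
qed simp

corollary word_equiv_Cons_distinct:
  "is_path (x # u) \<Longrightarrow> x # u \<approx> y # v \<Longrightarrow> x \<noteq> y \<Longrightarrow> \<exists>w. u \<approx> x \<star> y # w \<and> v \<approx> y \<star> x # w"
  using word_equiv_Cons_complemented_tails unfolding complemented_tails_def by auto

section \<open>The quadratic isoperimetric inequality\<close>

definition star_move :: "'a list \<Rightarrow> 'a list \<Rightarrow> bool" where
  "star_move xs ys \<longleftrightarrow> (\<exists>p q x y. x \<in> A \<and> y \<in> A \<and> x \<noteq> y \<and> s x = s y \<and>
     xs = p @ [x, x \<star> y] @ q \<and> ys = p @ [y, y \<star> x] @ q)"

lemma star_move_word_equiv: "star_move xs ys \<Longrightarrow> xs \<approx> ys"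
  unfolding star_move_def using complement_swap word_equiv_append_left by fastforce

lemma star_moves_word_equiv: "(star_move ^^ n) xs ys \<Longrightarrow> xs \<approx> ys"
proof -
  assume "(star_move ^^ n) xs ys"
  then have "(word_equiv)\<^sup>*\<^sup>* xs ys"
    using relpowp_imp_rtranclp mono_rtranclp star_move_word_equiv by (metis predicate2I)
  then show "xs \<approx> ys"
    by simp
qed

lemma star_moves_Cons: "(star_move ^^ n) xs ys \<Longrightarrow> (star_move ^^ n) (a # xs) (a # ys)"
proof (induction n arbitrary: ys)
  case (Suc n)
  then obtain zs where "(star_move ^^ n) xs zs" "star_move zs ys"
    by (auto elim: relpowp_Suc_E)
  moreover have "star_move zs ys \<Longrightarrow> star_move (a # zs) (a # ys)"
    unfolding star_move_def by (metis append_Cons)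
  ultimately show ?case
    using Suc.IH relpowp_Suc_I by metis
qed simp

lemma star_moves_to_head:
  assumes "is_path (x # u)" "x # u \<approx> a # w"
  shows "\<exists>w' k. (star_move ^^ k) (x # u) (a # w') \<and> k \<le> length u"
  using assms
proof (induction "length u" arbitrary: x u a w rule: less_induct)
  case less
  show ?case
  proof (cases "x = a")
    case True
    then show ?thesis
      by (intro exI[of _ u] exI[of _ 0]) simp
  next
    case False
    obtain w0 where w0: "u \<approx> x \<star> a # w0"
      using word_equiv_Cons_distinct[OF less.prems False] by blast
    then obtain y u' where u: "u = y # u'"
      using word_equiv_length by (cases u) fastforce+
    have x: "x \<in> A" and a: "a \<in> A" "s a = s x"
      using less.prems word_equiv_is_path[OF less.prems(2)] word_equiv_src_hd by auto
    obtain w' k where k: "(star_move ^^ k) (y # u') (x \<star> a # w')" "k \<le> length u'"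
      using less.hyps[of u' y "x \<star> a" w0] u w0 less.prems(1) is_path_if_path_from by auto
    have "star_move (x # x \<star> a # w') (a # a \<star> x # w')"
      unfolding star_move_def
      by (intro exI[of _ "[]"] exI[of _ w'] exI[of _ x] exI[of _ a]) (simp add: x a False)
    then have "(star_move ^^ Suc k) (x # u) (a # a \<star> x # w')"
      using star_moves_Cons[OF k(1)] u relpowp_Suc_I by metis
    then show ?thesis
      using k(2) u by (intro exI[of _ "a \<star> x # w'"] exI[of _ "Suc k"]) simp
  qed
qed

text \<open>Bring the first letter into place with at most \<open>length u - 1\<close> moves, cancel it, and
  recurse: this is the quadratic isoperimetric inequality.\<close>
theorem star_moves_quadratic:
  assumes "is_path u" "u \<approx> v"
  shows "\<exists>k. (star_move ^^ k) u v \<and> k \<le> (length u)\<^sup>2"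
  using assms
proof (induction "length u" arbitrary: u v rule: less_induct)
  case less
  show ?case
  proof (cases u)
    case Nil
    then show ?thesis
      using word_equiv_length[OF less.prems(2)] by (intro exI[of _ 0]) simp
  next
    case (Cons x u')
    then obtain a v' where v: "v = a # v'"
      using word_equiv_length[OF less.prems(2)] by (cases v) auto
    obtain w' k1 where k1: "(star_move ^^ k1) (x # u') (a # w')" "k1 \<le> length u'"
      using star_moves_to_head less.prems Cons v by blast
    have xa: "x # u' \<approx> a # w'"
      using star_moves_word_equiv[OF k1(1)] .
    have path: "is_path (a # w')"
      using word_equiv_is_path[OF xa] less.prems(1) Cons by simp
    have "a # w' \<approx> a # v'"
      using equivclp_trans[OF equivclp_sym[OF xa]] less.prems(2) Cons v by simp
    then have "w' \<approx> v'"
      using word_equiv_Cons_cancel[OF path] by blast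
    moreover have "length w' = length u'"
      using word_equiv_length[OF xa] by simp
    ultimately obtain k2 where k2: "(star_move ^^ k2) w' v'" "k2 \<le> (length u')\<^sup>2"
      using less.hyps[of w' v'] path Cons is_path_if_path_from by auto
    have "(star_move ^^ (k1 + k2)) u v"
      using relpowp_trans[OF k1(1) star_moves_Cons[OF k2(1)]] Cons v by simp
    moreover have "k1 + k2 \<le> (length u)\<^sup>2"
      using k1(2) k2(2) Cons by (simp add: power2_eq_square)
    ultimately show ?thesis
      by blast
  qed
qed

lemma sigma_step_iff: "sigma_step A s t \<sigma> P Q \<longleftrightarrow> fst P = fst Q \<and> sigma_move (snd P) (snd Q)"
  unfolding sigma_step_def sigma_move_def composable_pair_def by blast

lemma star_step_iff: "star_step A s t \<sigma> P Q \<longleftrightarrow> fst P = fst Q \<and> star_move (snd P) (snd Q)"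
  unfolding star_step_def star_move_def by blast

lemma word_equiv_path_equiv: "xs \<approx> ys \<Longrightarrow> path_equiv A s t \<sigma> (v, xs) (v, ys)"
  unfolding path_equiv_def equivclp_def[symmetric]
  by (induction rule: equivclp_induct) (auto simp: sigma_step_iff intro: equivclp_into_equivclp)

lemma path_equiv_iff: "path_equiv A s t \<sigma> P Q \<longleftrightarrow> fst P = fst Q \<and> snd P \<approx> snd Q"
proof
  assume "path_equiv A s t \<sigma> P Q"
  then have "equivclp (sigma_step A s t \<sigma>) P Q"
    unfolding path_equiv_def equivclp_def .
  then show "fst P = fst Q \<and> snd P \<approx> snd Q"
    by (induction rule: equivclp_induct)
      (auto simp: sigma_step_iff intro: equivclp_into_equivclp)
next
  assume "fst P = fst Q \<and> snd P \<approx> snd Q"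
  then show "path_equiv A s t \<sigma> P Q"
    using word_equiv_path_equiv[of "snd P" "snd Q" "fst P"] by (metis prod.collapse)
qed

lemma star_moves_star_steps:
  "(star_move ^^ k) xs ys \<Longrightarrow> (star_step A s t \<sigma> ^^ k) (v, xs) (v, ys)"
proof (induction k arbitrary: ys)
  case (Suc k)
  then obtain zs where "(star_move ^^ k) xs zs" "star_move zs ys"
    by (auto elim: relpowp_Suc_E)
  then show ?case
    using Suc.IH star_step_iff relpowp_Suc_I by (metis fst_conv snd_conv)
qed simp

lemma path_equiv_star_steps:
  assumes "valid_path L A s t P" "path_equiv A s t \<sigma> P Q"
  shows "\<exists>k. (star_step A s t \<sigma> ^^ k) P Q \<and> k \<le> (length (snd P))\<^sup>2"
proof -
  have "is_path (snd P)"
    using assms(1) valid_path_iff is_path_if_path_from by (metis prod.collapse)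
  then obtain k where "(star_move ^^ k) (snd P) (snd Q)" "k \<le> (length (snd P))\<^sup>2"
    using star_moves_quadratic assms(2) path_equiv_iff by blast
  then show ?thesis
    using star_moves_star_steps[of k "snd P" "snd Q" "fst P"] assms(2) path_equiv_iff
    by (metis prod.collapse)
qed

lemma star_steps_path_equiv: "(star_step A s t \<sigma>)\<^sup>*\<^sup>* P Q \<Longrightarrow> path_equiv A s t \<sigma> P Q"
  by (induction rule: rtranclp_induct)
    (auto simp: path_equiv_iff star_step_iff dest: star_move_word_equiv intro: equivclp_trans)

theorem path_equiv_iff_star_steps:
  "valid_path L A s t P \<Longrightarrow> path_equiv A s t \<sigma> P Q \<longleftrightarrow> (star_step A s t \<sigma>)\<^sup>*\<^sup>* P Q"
  using path_equiv_star_steps star_steps_path_equiv relpowp_imp_rtranclp by metis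

theorem quadratic_isoperimetric_inequality:
  "\<exists>K::real. \<forall>P Q. valid_path L A s t P \<longrightarrow> valid_path L A s t Q \<longrightarrow> path_equiv A s t \<sigma> P Q \<longrightarrow>
     (\<exists>n. (star_step A s t \<sigma> ^^ n) P Q \<and> real n \<le> K * (real (length (snd P) + length (snd Q)))\<^sup>2)"
proof (rule exI[of _ 1], intro allI impI)
  fix P Q
  assume "valid_path L A s t P" and "valid_path L A s t Q" and "path_equiv A s t \<sigma> P Q"
  then obtain n where n: "(star_step A s t \<sigma> ^^ n) P Q" "n \<le> (length (snd P))\<^sup>2"
    using path_equiv_star_steps by blast
  have "(length (snd P))\<^sup>2 \<le> (length (snd P) + length (snd Q))\<^sup>2"
    by (simp add: power_mono)
  then have "n \<le> (length (snd P) + length (snd Q))\<^sup>2"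
    using n(2) by linarith
  then have "real n \<le> 1 * (real (length (snd P) + length (snd Q)))\<^sup>2"
    by (metis mult_1 of_nat_le_iff of_nat_power)
  then show "\<exists>n. (star_step A s t \<sigma> ^^ n) P Q \<and> real n \<le> 1 * (real (length (snd P) + length (snd Q)))\<^sup>2"
    using n(1) by blast
qed

section \<open>The structure category\<close>

abbreviation \<C> where "\<C> \<equiv> structure_cat L A s t \<sigma>"

definition word_class :: "'v \<Rightarrow> 'a list \<Rightarrow> ('v \<times> 'a list) set" where
  "word_class v xs = path_class A s t \<sigma> (v, xs)"

lemma mem_word_class: "P \<in> word_class v xs \<longleftrightarrow> fst P = v \<and> xs \<approx> snd P"
  unfolding word_class_def path_class_def path_equiv_iff by auto

lemma word_class_eq_iff: "word_class v xs = word_class w ys \<longleftrightarrow> v = w \<and> xs \<approx> ys"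
proof
  assume eq: "word_class v xs = word_class w ys"
  have "(v, xs) \<in> word_class v xs"
    by (simp add: mem_word_class)
  then have "v = w \<and> ys \<approx> xs"
    unfolding eq by (simp add: mem_word_class)
  then show "v = w \<and> xs \<approx> ys"
    by (metis equivclp_sym)
next
  assume "v = w \<and> xs \<approx> ys"
  then show "word_class v xs = word_class w ys"
    unfolding set_eq_iff mem_word_class by (meson equivclp_sym equivclp_trans)
qed

text \<open>The structure category picks its operations on a class through a representative chosen
  by \<open>SOME\<close>; any representative is equivalent to the defining word.\<close>
lemma some_word_class:
  "fst (SOME P. P \<in> word_class v xs) = v" "xs \<approx> snd (SOME P. P \<in> word_class v xs)"
proof -
  have "(SOME P. P \<in> word_class v xs) \<in> word_class v xs"
    by (rule someI[of _ "(v, xs)"]) (simp add: mem_word_class)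
  then show "fst (SOME P. P \<in> word_class v xs) = v" "xs \<approx> snd (SOME P. P \<in> word_class v xs)"
    by (simp_all add: mem_word_class)
qed

lemma csrc_word_class [simp]: "csrc \<C> (word_class v xs) = v"
  unfolding structure_cat_def using some_word_class by simp

lemma ctgt_word_class [simp]: "ctgt \<C> (word_class v xs) = path_end v xs"
  unfolding structure_cat_def
  using some_word_class word_equiv_path_end path_tgt_eq_path_end by (simp, metis prod.collapse)

lemma cmul_word_class [simp]: "cmul \<C> (word_class v xs) (word_class w ys) = word_class v (xs @ ys)"
proof -
  have "cmul \<C> (word_class v xs) (word_class w ys) = word_class v
      (snd (SOME P. P \<in> word_class v xs) @ snd (SOME Q. Q \<in> word_class w ys))"
    unfolding structure_cat_def word_class_def[symmetric] using some_word_class by simp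
  also have "\<dots> = word_class v (xs @ ys)"
    unfolding word_class_eq_iff
    using equivclp_sym[OF word_equiv_append_both[OF some_word_class(2) some_word_class(2)]] by simp
  finally show ?thesis .
qed

lemma cid_eq_word_class: "cid \<C> v = word_class v []"
  unfolding structure_cat_def word_class_def by simp

lemma cobj_C [simp]: "cobj \<C> = L"
  unfolding structure_cat_def by simp

abbreviation J where "J \<equiv> jmap A s t \<sigma>"

lemma jmap_eq_word_class: "J x = word_class (s x) [x]"
  unfolding jmap_def word_class_def by simp

lemma cmor_C: "cmor \<C> = {word_class v xs | v xs. v \<in> L \<and> path_from v xs}"
  unfolding structure_cat_def word_class_def by (auto simp: valid_path_iff[symmetric])

lemma word_class_in_cmor_iff: "word_class v xs \<in> cmor \<C> \<longleftrightarrow> v \<in> L \<and> path_from v xs"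
  unfolding cmor_C by (auto simp: word_class_eq_iff dest: word_equiv_path_from intro: equivclp_refl)

lemma cmorE:
  assumes "c \<in> cmor \<C>"
  obtains v xs where "c = word_class v xs" "v \<in> L" "path_from v xs"
  using assms unfolding cmor_C by blast

definition mor_length :: "('v \<times> 'a list) set \<Rightarrow> nat" where
  "mor_length c = length (snd (SOME P. P \<in> c))"

lemma mor_length_word_class [simp]: "mor_length (word_class v xs) = length xs"
  unfolding mor_length_def using some_word_class(2) word_equiv_length by metis

lemma composable_word_class_iff: "composable \<C> (word_class v xs) (word_class w ys) \<longleftrightarrow> path_end v xs = w"
  unfolding composable_def by simp

lemma left_divides_word_class_iff:
  assumes "v \<in> L"
  shows "left_divides \<C> (word_class v xs) m \<longleftrightarrow> (\<exists>zs. path_from v (xs @ zs) \<and> m = word_class v (xs @ zs))"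
proof
  assume "left_divides \<C> (word_class v xs) m"
  then obtain z where z: "word_class v xs \<in> cmor \<C>" "z \<in> cmor \<C>"
      "composable \<C> (word_class v xs) z" "m = cmul \<C> (word_class v xs) z"
    unfolding left_divides_def by blast
  obtain w zs where "z = word_class w zs" "path_from w zs"
    using z(2) by (rule cmorE)
  then show "\<exists>zs. path_from v (xs @ zs) \<and> m = word_class v (xs @ zs)"
    using z word_class_in_cmor_iff composable_word_class_iff by auto
next
  assume "\<exists>zs. path_from v (xs @ zs) \<and> m = word_class v (xs @ zs)"
  then obtain zs where "path_from v (xs @ zs)" "m = word_class v (xs @ zs)"
    by blast
  then show "left_divides \<C> (word_class v xs) m"
    unfolding left_divides_def using assms path_end_in_L word_class_in_cmor_iff composable_word_class_iff
    by (auto intro!: bexI[of _ "word_class (path_end v xs) zs"])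
qed

lemma left_divides_antisym:
  assumes "left_divides \<C> a b" "left_divides \<C> b a"
  shows "a = b"
proof -
  obtain v xs where a: "a = word_class v xs" "v \<in> L"
    using assms(1) unfolding left_divides_def by (auto elim: cmorE)
  obtain zs where b: "b = word_class v (xs @ zs)"
    using assms(1) left_divides_word_class_iff a by blast
  obtain zs' where "a = word_class v (xs @ zs @ zs')"
    using assms(2) left_divides_word_class_iff a b by fastforce
  then have "zs = []"
    using a word_class_eq_iff word_equiv_length by fastforce
  then show ?thesis
    using a b by simp
qed

theorem left_cancellative_C: "left_cancellative \<C>"
  unfolding left_cancellative_def
proof (intro ballI impI)
  fix x y z assume m: "x \<in> cmor \<C>" "y \<in> cmor \<C>" "z \<in> cmor \<C>"
    and c: "composable \<C> x y \<and> composable \<C> x z \<and> cmul \<C> x y = cmul \<C> x z"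
  obtain v xs where x: "x = word_class v xs" "path_from v xs" using m(1) by (rule cmorE)
  obtain w ys where y: "y = word_class w ys" "path_from w ys" using m(2) by (rule cmorE)
  obtain w' zs where z: "z = word_class w' zs" using m(3) by (rule cmorE)
  have w: "w = path_end v xs" "w' = path_end v xs"
    using c x y z composable_word_class_iff by auto
  have "xs @ ys \<approx> xs @ zs" "is_path (xs @ ys)"
    using c x y z w word_class_eq_iff is_path_if_path_from[of v "xs @ ys"] by auto
  then have "ys \<approx> zs"
    by (metis word_equiv_append_cancel)
  then show "y = z"
    using y z w word_class_eq_iff by simp
qed

lemma invertible_imp_identity:
  assumes "invertible \<C> x"
  shows "is_identity \<C> x"
proof -
  obtain y where y: "x \<in> cmor \<C>" "y \<in> cmor \<C>" "cmul \<C> x y = cid \<C> (csrc \<C> x)"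
    using assms unfolding invertible_def by blast
  obtain v xs where x: "x = word_class v xs" "v \<in> L" using y(1) by (rule cmorE)
  obtain w ys where "y = word_class w ys" using y(2) by (rule cmorE)
  then have "xs @ ys \<approx> []"
    using y(3) x cid_eq_word_class word_class_eq_iff by simp
  then have "xs = []"
    using word_equiv_length by fastforce
  then show ?thesis
    unfolding is_identity_def using x cid_eq_word_class by auto
qed

lemma invertible_iff_mor_length_0: "invertible \<C> x \<longleftrightarrow> x \<in> cmor \<C> \<and> mor_length x = 0"
proof
  assume x: "invertible \<C> x"
  then obtain v where "x = word_class v []"
    using invertible_imp_identity cid_eq_word_class unfolding is_identity_def by auto
  then show "x \<in> cmor \<C> \<and> mor_length x = 0"
    using x unfolding invertible_def by simp
next
  assume x: "x \<in> cmor \<C> \<and> mor_length x = 0"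
  then obtain v where "x = word_class v []"
    by (metis cmorE length_0_conv mor_length_word_class)
  then show "invertible \<C> x"
    unfolding invertible_def composable_def using x cid_eq_word_class by (auto intro!: bexI[of _ x])
qed

text \<open>Composition in \<open>\<C>\<close> is defined on all classes, composable or not, and it is associative
  there; this is what makes iterated products easy to rebracket.\<close>
definition is_word_class :: "('v \<times> 'a list) set \<Rightarrow> bool" where
  "is_word_class c \<longleftrightarrow> (\<exists>v xs. c = word_class v xs)"

lemma is_word_class_if_cmor: "c \<in> cmor \<C> \<Longrightarrow> is_word_class c"
  unfolding is_word_class_def by (metis cmorE)

lemma is_word_class_cmul: "is_word_class (cmul \<C> a b)"
  unfolding is_word_class_def structure_cat_def word_class_def by auto

lemma cmul_assoc:
  "is_word_class a \<Longrightarrow> is_word_class b \<Longrightarrow> is_word_class c \<Longrightarrow>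
    cmul \<C> (cmul \<C> a b) c = cmul \<C> a (cmul \<C> b c)"
  unfolding is_word_class_def by auto

lemma csrc_cmul: "a \<in> cmor \<C> \<Longrightarrow> b \<in> cmor \<C> \<Longrightarrow> csrc \<C> (cmul \<C> a b) = csrc \<C> a"
  by (metis cmorE cmul_word_class csrc_word_class)

lemma cmul_in_cmor:
  assumes "a \<in> cmor \<C>" "b \<in> cmor \<C>" "composable \<C> a b"
  shows "cmul \<C> a b \<in> cmor \<C>"
proof -
  obtain v xs where "a = word_class v xs" "v \<in> L" "path_from v xs" using assms(1) by (rule cmorE)
  moreover obtain w ys where "b = word_class w ys" "path_from w ys" using assms(2) by (rule cmorE)
  ultimately show ?thesis
    using assms(3) composable_word_class_iff word_class_in_cmor_iff by simp
qed

lemma ctgt_cmul: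
  assumes "a \<in> cmor \<C>" "b \<in> cmor \<C>" "composable \<C> a b"
  shows "ctgt \<C> (cmul \<C> a b) = ctgt \<C> b"
proof -
  obtain v xs where "a = word_class v xs" using assms(1) by (rule cmorE)
  moreover obtain w ys where "b = word_class w ys" using assms(2) by (rule cmorE)
  ultimately show ?thesis
    using assms(3) composable_word_class_iff by simp
qed

lemma composable_cmul_left:
  "a \<in> cmor \<C> \<Longrightarrow> b \<in> cmor \<C> \<Longrightarrow> composable \<C> a b \<Longrightarrow>
    composable \<C> (cmul \<C> a b) d \<longleftrightarrow> composable \<C> b d"
  using ctgt_cmul[of a b] unfolding composable_def by simp

lemma composable_cmul_right:
  "a \<in> cmor \<C> \<Longrightarrow> b \<in> cmor \<C> \<Longrightarrow> composable \<C> d (cmul \<C> a b) \<longleftrightarrow> composable \<C> d a"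
  unfolding composable_def by (simp add: csrc_cmul)

lemma cmul_assoc_cmor:
  "a \<in> cmor \<C> \<Longrightarrow> b \<in> cmor \<C> \<Longrightarrow> c \<in> cmor \<C> \<Longrightarrow>
    cmul \<C> (cmul \<C> a b) c = cmul \<C> a (cmul \<C> b c)"
  by (simp add: cmul_assoc is_word_class_if_cmor)

lemma cid_in_cmor: "v \<in> L \<Longrightarrow> cid \<C> v \<in> cmor \<C>"
  by (simp add: cid_eq_word_class word_class_in_cmor_iff)

lemma csrc_cid [simp]: "csrc \<C> (cid \<C> v) = v" and ctgt_cid [simp]: "ctgt \<C> (cid \<C> v) = v"
  by (simp_all add: cid_eq_word_class)

lemma cid_cmul: "a \<in> cmor \<C> \<Longrightarrow> cmul \<C> (cid \<C> (csrc \<C> a)) a = a"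
  by (metis cmorE cid_eq_word_class cmul_word_class csrc_word_class append_Nil)

lemma cmul_cid: "a \<in> cmor \<C> \<Longrightarrow> cmul \<C> a (cid \<C> (ctgt \<C> a)) = a"
  by (metis cmorE cid_eq_word_class cmul_word_class append_Nil2)

lemma csrc_in_L: "a \<in> cmor \<C> \<Longrightarrow> csrc \<C> a \<in> L"
  by (metis cmorE csrc_word_class)

lemma ctgt_in_L: "a \<in> cmor \<C> \<Longrightarrow> ctgt \<C> a \<in> L"
  by (metis cmorE ctgt_word_class path_end_in_L)

lemma left_dividesD: "left_divides \<C> a b \<Longrightarrow> a \<in> cmor \<C> \<and> b \<in> cmor \<C>"
  unfolding left_divides_def by blast

lemma left_divides_cmul:
  "a \<in> cmor \<C> \<Longrightarrow> b \<in> cmor \<C> \<Longrightarrow> composable \<C> a b \<Longrightarrow> left_divides \<C> a (cmul \<C> a b)"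
  unfolding left_divides_def using cmul_in_cmor by blast

lemma left_divides_refl: "a \<in> cmor \<C> \<Longrightarrow> left_divides \<C> a a"
  using left_divides_cmul[of a "cid \<C> (ctgt \<C> a)"] cmul_cid cid_in_cmor ctgt_in_L
  unfolding composable_def by simp

lemma cid_left_divides: "a \<in> cmor \<C> \<Longrightarrow> left_divides \<C> (cid \<C> (csrc \<C> a)) a"
  using left_divides_cmul[of "cid \<C> (csrc \<C> a)" a] cid_cmul cid_in_cmor csrc_in_L
  unfolding composable_def by simp

lemma left_dividesE:
  assumes "left_divides \<C> a b"
  obtains v xs zs where "a = word_class v xs" "b = word_class v (xs @ zs)" "v \<in> L"
    "path_from v (xs @ zs)"
  by (metis assms cmorE left_dividesD left_divides_word_class_iff)

lemma left_divides_trans: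
  assumes "left_divides \<C> a b" "left_divides \<C> b c"
  shows "left_divides \<C> a c"
proof -
  obtain v xs zs where a: "a = word_class v xs" "b = word_class v (xs @ zs)" "v \<in> L"
    using assms(1) by (rule left_dividesE)
  obtain zs' where "path_from v (xs @ zs @ zs')" "c = word_class v (xs @ zs @ zs')"
    using assms(2) a left_divides_word_class_iff by fastforce
  then show ?thesis
    using a left_divides_word_class_iff by (metis append.assoc)
qed

lemma left_divides_csrc: "left_divides \<C> a b \<Longrightarrow> csrc \<C> a = csrc \<C> b"
  by (metis left_dividesE csrc_word_class)

lemma left_divides_mor_length: "left_divides \<C> a b \<Longrightarrow> mor_length a \<le> mor_length b"
  by (metis left_dividesE mor_length_word_class length_append le_add1)

lemma left_divides_mor_length_eq: "left_divides \<C> a b \<Longrightarrow> mor_length a = mor_length b \<Longrightarrow> a = b"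
  by (elim left_dividesE) simp

lemma left_divides_cancel:
  assumes "a \<in> cmor \<C>" "b \<in> cmor \<C>" "c \<in> cmor \<C>" "composable \<C> a b" "composable \<C> a c"
    and "left_divides \<C> (cmul \<C> a b) (cmul \<C> a c)"
  shows "left_divides \<C> b c"
proof -
  obtain v xs where a: "a = word_class v xs" "v \<in> L" "path_from v xs" using assms(1) by (rule cmorE)
  obtain w ys where b: "b = word_class w ys" "w \<in> L" using assms(2) by (rule cmorE)
  obtain w' zs where c: "c = word_class w' zs" "path_from w' zs" using assms(3) by (rule cmorE)
  have w: "w = path_end v xs" "w' = path_end v xs"
    using assms(4,5) a b c composable_word_class_iff by auto
  obtain rs where rs: "path_from v (xs @ ys @ rs)" "xs @ zs \<approx> xs @ ys @ rs"
    using assms(6) a b c left_divides_word_class_iff word_class_eq_iff by fastforce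
  have "zs \<approx> ys @ rs"
    using word_equiv_append_cancel[OF _ rs(2)] a c w is_path_if_path_from[of v "xs @ zs"] by simp
  then show ?thesis
    using rs(1) b c w left_divides_word_class_iff word_class_eq_iff by auto
qed

lemma left_divides_cmul_mono:
  assumes "a \<in> cmor \<C>" "composable \<C> a b" "left_divides \<C> b c"
  shows "left_divides \<C> (cmul \<C> a b) (cmul \<C> a c)"
proof -
  obtain v xs where a: "a = word_class v xs" "v \<in> L" "path_from v xs" using assms(1) by (rule cmorE)
  obtain w ys zs where "b = word_class w ys" "c = word_class w (ys @ zs)" "path_from w (ys @ zs)"
    using assms(3) by (rule left_dividesE)
  then show ?thesis
    using a assms(2) composable_word_class_iff left_divides_word_class_iff by auto
qed

lemma is_right_lcm_commute: "is_right_lcm \<C> a b m \<longleftrightarrow> is_right_lcm \<C> b a m"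
  unfolding is_right_lcm_def common_right_multiple_def by blast

lemma is_right_lcm_if_left_divides: "left_divides \<C> a b \<Longrightarrow> is_right_lcm \<C> a b b"
  unfolding is_right_lcm_def common_right_multiple_def using left_divides_refl left_dividesD by blast

lemma common_right_multiple_csrc: "common_right_multiple \<C> a b m \<Longrightarrow> csrc \<C> a = csrc \<C> b"
  unfolding common_right_multiple_def using left_divides_csrc by metis

lemma is_right_lcm_in_cmor: "is_right_lcm \<C> a b m \<Longrightarrow> m \<in> cmor \<C>"
  unfolding is_right_lcm_def common_right_multiple_def using left_dividesD by blast

section \<open>Right-lcms\<close>

definition word_right_lcm :: "'a list \<Rightarrow> 'a list \<Rightarrow> 'a list \<Rightarrow> 'a list \<Rightarrow> bool" where
  "word_right_lcm f g a b \<longleftrightarrow> f @ a \<approx> g @ b \<and>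
     (\<forall>p q. is_path (f @ p) \<and> f @ p \<approx> g @ q \<longrightarrow> (\<exists>r. p \<approx> a @ r \<and> q \<approx> b @ r))"

lemma word_right_lcm_Nil: "word_right_lcm [] g g []"
  unfolding word_right_lcm_def by auto

lemma word_right_lcm_same: "word_right_lcm [x] (x # g) g []"
  unfolding word_right_lcm_def using word_equiv_Cons_cancel by fastforce

lemma word_right_lcm_Nil_right: "word_right_lcm [x] [] [] [x]"
  unfolding word_right_lcm_def by (simp, metis equivclp_refl equivclp_sym)

lemma word_right_lcm_atoms:
  assumes "x \<in> A" "y \<in> A" "s y = s x" "x \<noteq> y"
  shows "word_right_lcm [x] [y] [x \<star> y] [y \<star> x]"
  unfolding word_right_lcm_def
proof (intro conjI allI impI)
  show "[x] @ [x \<star> y] \<approx> [y] @ [y \<star> x]"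
    using complement_swap[OF assms(1-3), of "[]"] by simp
next
  fix p q assume "is_path ([x] @ p) \<and> [x] @ p \<approx> [y] @ q"
  then show "\<exists>r. p \<approx> [x \<star> y] @ r \<and> q \<approx> [y \<star> x] @ r"
    using word_equiv_Cons_distinct assms(4) by fastforce
qed

lemma word_right_lcm_Cons:
  assumes "x \<in> A" "y \<in> A" "s y = s x" "x \<noteq> y"
    and lcm: "word_right_lcm [y \<star> x] g a b"
  shows "word_right_lcm [x] (y # g) (x \<star> y # a) b"
  unfolding word_right_lcm_def
proof (intro conjI allI impI)
  have "x # x \<star> y # a \<approx> y # y \<star> x # a"
    using complement_swap[OF assms(1-3)] .
  also have "\<dots> \<approx> y # g @ b"
    using lcm unfolding word_right_lcm_def by (simp add: word_equiv_Cons)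
  finally show "[x] @ x \<star> y # a \<approx> (y # g) @ b"
    by simp
next
  fix p q assume pq: "is_path ([x] @ p) \<and> [x] @ p \<approx> (y # g) @ q"
  then obtain w where w: "p \<approx> x \<star> y # w" "g @ q \<approx> y \<star> x # w"
    using word_equiv_Cons_distinct assms(4) by fastforce
  have "is_path ([y \<star> x] @ w)"
    using word_equiv_is_path[OF w(2)] word_equiv_is_path[OF pq[THEN conjunct2]] pq
      is_path_if_path_from by auto
  then obtain r where r: "w \<approx> a @ r" "q \<approx> b @ r"
    using lcm equivclp_sym[OF w(2)] unfolding word_right_lcm_def by fastforce
  have "p \<approx> (x \<star> y # a) @ r"
    using equivclp_trans[OF w(1) word_equiv_Cons[OF r(1)]] by simp
  then show "\<exists>r. p \<approx> (x \<star> y # a) @ r \<and> q \<approx> b @ r"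
    using r(2) by blast
qed

lemma word_right_lcm_exists_single:
  assumes "is_path (x # p)" "x # p \<approx> g @ q"
  shows "\<exists>a b. word_right_lcm [x] g a b"
  using assms
proof (induction g arbitrary: x p q)
  case Nil
  then show ?case
    using word_right_lcm_Nil_right by blast
next
  case (Cons y g)
  show ?case
  proof (cases "x = y")
    case True
    then show ?thesis
      using word_right_lcm_same by blast
  next
    case False
    have xy: "x # p \<approx> y # g @ q"
      using Cons.prems by simp
    obtain w where w: "p \<approx> x \<star> y # w" "g @ q \<approx> y \<star> x # w"
      using word_equiv_Cons_distinct[OF Cons.prems(1) xy False] by blast
    have "is_path (y # g @ q)"
      using word_equiv_is_path[OF xy Cons.prems(1)] .
    then have "is_path (y \<star> x # w)"
      using word_equiv_is_path[OF w(2)] is_path_if_path_from by auto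
    then obtain a b where "word_right_lcm [y \<star> x] g a b"
      using Cons.IH equivclp_sym[OF w(2)] by blast
    moreover have "x \<in> A" "y \<in> A" "s y = s x"
      using Cons.prems word_equiv_is_path[OF xy] word_equiv_src_hd[OF xy] by auto
    ultimately show ?thesis
      using word_right_lcm_Cons False by blast
  qed
qed

lemma word_right_lcm_Cons_left:
  assumes head: "word_right_lcm [x] g a b" and tail: "word_right_lcm f a a' b'"
  shows "word_right_lcm (x # f) g a' (b @ b')"
  unfolding word_right_lcm_def
proof (intro conjI allI impI)
  have "x # f @ a' \<approx> x # a @ b'"
    using tail unfolding word_right_lcm_def by (simp add: word_equiv_Cons)
  also have "\<dots> \<approx> g @ b @ b'"
    using word_equiv_append_right[of "[x] @ a" "g @ b" b'] head unfolding word_right_lcm_def by simp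
  finally show "(x # f) @ a' \<approx> g @ b @ b'"
    by simp
next
  fix p q assume pq: "is_path ((x # f) @ p) \<and> (x # f) @ p \<approx> g @ q"
  then have "is_path ([x] @ f @ p) \<and> [x] @ f @ p \<approx> g @ q"
    by simp
  then obtain r1 where r1: "f @ p \<approx> a @ r1" "q \<approx> b @ r1"
    using head unfolding word_right_lcm_def by blast
  have "is_path (f @ p)"
    using pq is_path_if_path_from by auto
  then obtain r2 where r2: "p \<approx> a' @ r2" "r1 \<approx> b' @ r2"
    using tail r1(1) unfolding word_right_lcm_def by blast
  have "q \<approx> (b @ b') @ r2"
    using equivclp_trans[OF r1(2) word_equiv_append_left[OF r2(2)]] by simp
  then show "\<exists>r. p \<approx> a' @ r \<and> q \<approx> (b @ b') @ r"
    using r2(1) by blast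
qed

lemma word_right_lcm_exists:
  assumes "is_path (f @ p)" "f @ p \<approx> g @ q"
  shows "\<exists>a b. word_right_lcm f g a b"
  using assms
proof (induction f arbitrary: g p q)
  case Nil
  then show ?case
    using word_right_lcm_Nil by blast
next
  case (Cons x f)
  obtain a b where head: "word_right_lcm [x] g a b"
    using word_right_lcm_exists_single[of x "f @ p" g q] Cons.prems by auto
  have "is_path ([x] @ f @ p) \<and> [x] @ f @ p \<approx> g @ q"
    using Cons.prems by simp
  then obtain r where r: "f @ p \<approx> a @ r"
    using head unfolding word_right_lcm_def by blast
  have "is_path (f @ p)"
    using Cons.prems(1) is_path_if_path_from by auto
  then obtain a' b' where "word_right_lcm f a a' b'"
    using Cons.IH r by blast
  then show ?case
    using word_right_lcm_Cons_left[OF head] by blast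
qed

lemma is_right_lcm_word_class:
  assumes v: "v \<in> L" and path: "path_from v (f @ a)" and lcm: "word_right_lcm f g a b"
  shows "is_right_lcm \<C> (word_class v f) (word_class v g) (word_class v (f @ a))"
  unfolding is_right_lcm_def common_right_multiple_def
proof (intro conjI allI impI)
  have fg: "word_class v (f @ a) = word_class v (g @ b)" "path_from v (g @ b)"
    using lcm path word_equiv_path_from unfolding word_right_lcm_def word_class_eq_iff by blast+
  show "left_divides \<C> (word_class v f) (word_class v (f @ a))"
    using left_divides_word_class_iff[OF v] path by blast
  show "left_divides \<C> (word_class v g) (word_class v (f @ a))"
    using left_divides_word_class_iff[OF v] fg by auto
next
  fix w assume w: "left_divides \<C> (word_class v f) w \<and> left_divides \<C> (word_class v g) w"
  obtain p where p: "path_from v (f @ p)" "w = word_class v (f @ p)"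
    using w left_divides_word_class_iff[OF v] by blast
  obtain q where "w = word_class v (g @ q)"
    using w left_divides_word_class_iff[OF v] by blast
  then have "f @ p \<approx> g @ q"
    using p word_class_eq_iff by simp
  then obtain r where "p \<approx> a @ r"
    using lcm p is_path_if_path_from unfolding word_right_lcm_def by blast
  then have far: "f @ p \<approx> (f @ a) @ r"
    using word_equiv_append_left by fastforce
  then have "w = word_class v ((f @ a) @ r)" "path_from v ((f @ a) @ r)"
    using p word_class_eq_iff word_equiv_path_from[OF far, of v] by auto
  then show "left_divides \<C> (word_class v (f @ a)) w"
    using left_divides_word_class_iff[OF v] by blast
qed

lemma right_lcm_exists:
  assumes "x \<in> cmor \<C>" "y \<in> cmor \<C>" "common_right_multiple \<C> x y m"
  shows "\<exists>l. is_right_lcm \<C> x y l"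
proof -
  obtain v f where x: "x = word_class v f" "v \<in> L" using assms(1) by (rule cmorE)
  obtain v' g where y: "y = word_class v' g" "v' \<in> L" using assms(2) by (rule cmorE)
  obtain p where p: "path_from v (f @ p)" "m = word_class v (f @ p)"
    using assms(3) left_divides_word_class_iff[OF x(2)] x unfolding common_right_multiple_def by blast
  obtain q where q: "m = word_class v' (g @ q)"
    using assms(3) left_divides_word_class_iff[OF y(2)] y unfolding common_right_multiple_def by blast
  have "word_class v (f @ p) = word_class v' (g @ q)"
    using p q by simp
  then have "v' = v" "f @ p \<approx> g @ q"
    by (simp_all add: word_class_eq_iff)
  moreover have path: "is_path (f @ p)"
    using p is_path_if_path_from by blast
  ultimately obtain a b where lcm: "word_right_lcm f g a b"
    using word_right_lcm_exists by blast
  then obtain r where "p \<approx> a @ r"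
    using \<open>f @ p \<approx> g @ q\<close> path unfolding word_right_lcm_def by blast
  then have "path_from v ((f @ a) @ r)"
    using p(1) word_equiv_path_from word_equiv_append_left by fastforce
  then show ?thesis
    using is_right_lcm_word_class[OF x(2) _ lcm] x y \<open>v' = v\<close> by auto
qed

lemma right_lcm_unique: "is_right_lcm \<C> x y m \<Longrightarrow> is_right_lcm \<C> x y m' \<Longrightarrow> m = m'"
  using left_divides_antisym unfolding is_right_lcm_def by blast

theorem unique_conditional_right_lcms_C: "unique_conditional_right_lcms \<C>"
  unfolding unique_conditional_right_lcms_def using right_lcm_exists right_lcm_unique by metis

theorem right_lcm_atoms:
  assumes "x \<in> A" "y \<in> A" "x \<noteq> y" "s x = s y"
  shows "cmul \<C> (J x) (J (x \<star> y)) = cmul \<C> (J y) (J (y \<star> x))"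
    and "is_right_lcm \<C> (J x) (J y) (cmul \<C> (J x) (J (x \<star> y)))"
proof -
  have xy: "x \<star> y \<in> A" "s (x \<star> y) = t x"
    using complement_in_A[OF assms(1,2)] src_complement[OF assms(1,2)] assms(4) by auto
  have "[x] @ [x \<star> y] \<approx> [y] @ [y \<star> x]"
    using complement_swap[OF assms(1,2), of "[]"] assms(4) by simp
  then show "cmul \<C> (J x) (J (x \<star> y)) = cmul \<C> (J y) (J (y \<star> x))"
    unfolding jmap_eq_word_class using assms(4) xy src_complement[OF assms(2,1)]
    by (simp add: word_class_eq_iff)
  have "is_right_lcm \<C> (word_class (s x) [x]) (word_class (s x) [y]) (word_class (s x) ([x] @ [x \<star> y]))"
    using is_right_lcm_word_class[OF src_in_L[OF assms(1)] _ word_right_lcm_atoms] assms xy by simp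
  then show "is_right_lcm \<C> (J x) (J y) (cmul \<C> (J x) (J (x \<star> y)))"
    unfolding jmap_eq_word_class using assms(4) xy by simp
qed

section \<open>Injectivity, atoms and Noetherianity\<close>

lemma word_equiv_singleton: "[x] \<approx> ys \<Longrightarrow> ys = [x]"
proof (induction rule: equivclp_induct)
  case (step y z)
  then show ?case
    by (auto simp: sigma_move_def)
qed simp

theorem inj_on_jmap: "inj_on J A"
  by (rule inj_onI) (auto simp: jmap_eq_word_class word_class_eq_iff dest: word_equiv_singleton)

lemma mor_length_cmul:
  "a \<in> cmor \<C> \<Longrightarrow> b \<in> cmor \<C> \<Longrightarrow> mor_length (cmul \<C> a b) = mor_length a + mor_length b"
  by (metis cmorE cmul_word_class mor_length_word_class length_append)

theorem noetherian_C: "noetherian \<C>"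
  unfolding noetherian_def
proof (rule wfp_if_convertible_to_nat[of _ mor_length])
  fix x y assume "proper_factor \<C> x y"
  then obtain y' y'' where x: "x \<in> cmor \<C>" "y' \<in> cmor \<C>" "y'' \<in> cmor \<C>"
    "composable \<C> y' x" "y = cmul \<C> (cmul \<C> y' x) y''"
    "\<not> invertible \<C> y' \<or> \<not> invertible \<C> y''"
    unfolding proper_factor_def by blast
  have "mor_length y = mor_length y' + mor_length x + mor_length y''"
    using x cmul_in_cmor mor_length_cmul by simp
  moreover have "0 < mor_length y' \<or> 0 < mor_length y''"
    using x invertible_iff_mor_length_0 by auto
  ultimately show "mor_length x < mor_length y"
    by linarith
qed

lemma is_chain_Cons:
  "is_chain \<C> (x # xs) \<longleftrightarrow> x \<in> cmor \<C> \<and> is_chain \<C> xs \<and> (xs \<noteq> [] \<longrightarrow> composable \<C> x (hd xs))"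
  unfolding is_chain_def successively_conv_nth[symmetric] by (auto simp: successively_Cons)

lemma list_prod_Cons:
  assumes "xs \<noteq> []" "is_word_class x" "\<forall>z\<in>set xs. is_word_class z"
  shows "list_prod \<C> (x # xs) = cmul \<C> x (list_prod \<C> xs)"
proof -
  have "foldl (cmul \<C>) (cmul \<C> x y) ys = cmul \<C> x (foldl (cmul \<C>) y ys)"
    if "is_word_class y" "\<forall>z\<in>set ys. is_word_class z" for y ys
    using that
  proof (induction ys arbitrary: y)
    case (Cons z zs)
    then show ?case
      using cmul_assoc[OF assms(2)] is_word_class_cmul by simp
  qed simp
  then show ?thesis
    using assms unfolding list_prod_def by (cases xs) auto
qed

lemma list_prod_chain:
  assumes "is_chain \<C> xs" "xs \<noteq> []"
  shows "list_prod \<C> xs \<in> cmor \<C> \<and> csrc \<C> (list_prod \<C> xs) = csrc \<C> (hd xs) \<and>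
    mor_length (list_prod \<C> xs) = sum_list (map mor_length xs) \<and>
    left_divides \<C> (hd xs) (list_prod \<C> xs)"
  using assms
proof (induction xs)
  case (Cons x xs)
  show ?case
  proof (cases "xs = []")
    case True
    then show ?thesis
      using Cons.prems left_divides_refl by (simp add: is_chain_Cons list_prod_def)
  next
    case False
    have x: "x \<in> cmor \<C>" "is_chain \<C> xs" "composable \<C> x (hd xs)"
      using Cons.prems False by (auto simp: is_chain_Cons)
    note IH = Cons.IH[OF x(2) False]
    have "list_prod \<C> (x # xs) = cmul \<C> x (list_prod \<C> xs)"
      using list_prod_Cons[OF False] x is_word_class_if_cmor unfolding is_chain_def by blast
    moreover have "composable \<C> x (list_prod \<C> xs)"
      using x(3) IH unfolding composable_def by simp
    ultimately show ?thesis
      using x(1) IH cmul_in_cmor csrc_cmul mor_length_cmul left_divides_cmul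
      by simp
  qed
qed simp

lemma atom_imp_jmap:
  assumes "atom \<C> x"
  shows "x \<in> J ` A"
proof -
  have x: "x \<in> cmor \<C>"
    and one: "\<And>ys. ys \<noteq> [] \<Longrightarrow> is_chain \<C> ys \<Longrightarrow> list_prod \<C> ys = x \<Longrightarrow>
      length (filter (\<lambda>y. \<not> invertible \<C> y) ys) = 1"
    using assms unfolding atom_def by blast+
  obtain v xs where xs: "x = word_class v xs" "v \<in> L" "path_from v xs"
    using x by (rule cmorE)
  consider "xs = []" | a where "xs = [a]" | a b rest where "xs = a # b # rest"
    by (metis list.exhaust)
  then show ?thesis
  proof cases
    case 1
    then have "invertible \<C> x"
      using invertible_iff_mor_length_0 x xs by simp
    then show ?thesis
      using one[of "[x]"] x by (simp add: is_chain_def list_prod_def)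
  next
    case (2 a)
    then show ?thesis
      using xs by (auto simp: jmap_eq_word_class)
  next
    case (3 a b rest)
    define c1 c2 where "c1 = word_class v [a]" and "c2 = word_class (t a) (b # rest)"
    have "is_chain \<C> [c1, c2]"
      unfolding c1_def c2_def using xs 3 src_in_L
      by (auto simp: is_chain_def word_class_in_cmor_iff composable_word_class_iff tgt_in_L)
    moreover have "list_prod \<C> [c1, c2] = x"
      unfolding list_prod_def c1_def c2_def using xs 3 by simp
    moreover have "\<not> invertible \<C> c1" "\<not> invertible \<C> c2"
      unfolding invertible_iff_mor_length_0 c1_def c2_def by auto
    ultimately show ?thesis
      using one[of "[c1, c2]"] by simp
  qed
qed

lemma atom_jmap:
  assumes "a \<in> A"
  shows "atom \<C> (J a)"
  unfolding atom_def
proof (intro conjI allI impI)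
  show "J a \<in> cmor \<C>"
    using assms src_in_L by (simp add: jmap_eq_word_class word_class_in_cmor_iff)
  fix ys assume ys: "ys \<noteq> [] \<and> is_chain \<C> ys \<and> list_prod \<C> ys = J a"
  then have "sum_list (map mor_length ys) = 1"
    using list_prod_chain[of ys] by (simp add: jmap_eq_word_class)
  then have "length (filter (\<lambda>y. mor_length y \<noteq> 0) ys) = 1"
    by (rule length_filter_eq_1_if_sum_list_eq_1)
  moreover have "filter (\<lambda>y. \<not> invertible \<C> y) ys = filter (\<lambda>y. mor_length y \<noteq> 0) ys"
    using ys invertible_iff_mor_length_0 unfolding is_chain_def by (intro filter_cong) auto
  ultimately show "length (filter (\<lambda>y. \<not> invertible \<C> y) ys) = 1"
    by simp
qed

theorem atoms_C: "{x. atom \<C> x} = J ` A"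
  using atom_imp_jmap atom_jmap by blast

section \<open>The Garside family\<close>

lemma left_divides_complement:
  assumes lcm: "is_right_lcm \<C> u c (cmul \<C> c u')"
    and "c \<in> cmor \<C>" "u' \<in> cmor \<C>" "z \<in> cmor \<C>" "composable \<C> c u'" "composable \<C> c z"
    and "left_divides \<C> u (cmul \<C> c z)"
  shows "left_divides \<C> u' z"
proof -
  have "left_divides \<C> (cmul \<C> c u') (cmul \<C> c z)"
    using lcm assms(7) left_divides_cmul[OF assms(2,4,6)]
    unfolding is_right_lcm_def common_right_multiple_def by blast
  then show ?thesis
    using left_divides_cancel assms(2-6) by blast
qed

lemma is_right_lcm_cmul:
  assumes c: "c1 \<in> cmor \<C>" "c2 \<in> cmor \<C>" "composable \<C> c1 c2"
    and u': "u1 \<in> cmor \<C>" "composable \<C> c1 u1" "u2 \<in> cmor \<C>" "composable \<C> c2 u2"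
    and lcm1: "is_right_lcm \<C> u c1 (cmul \<C> c1 u1)"
    and lcm2: "is_right_lcm \<C> u1 c2 (cmul \<C> c2 u2)"
  shows "is_right_lcm \<C> u (cmul \<C> c1 c2) (cmul \<C> (cmul \<C> c1 c2) u2)"
proof -
  have c12: "cmul \<C> c1 c2 \<in> cmor \<C>" "composable \<C> (cmul \<C> c1 c2) u2"
    using cmul_in_cmor[OF c] ctgt_cmul[OF c] u'(4) unfolding composable_def by auto
  have assoc: "cmul \<C> (cmul \<C> c1 c2) r = cmul \<C> c1 (cmul \<C> c2 r)" if "r \<in> cmor \<C>" for r
    using cmul_assoc_cmor c that by blast
  show ?thesis
    unfolding is_right_lcm_def common_right_multiple_def
  proof (intro conjI allI impI)
    have "left_divides \<C> (cmul \<C> c1 u1) (cmul \<C> c1 (cmul \<C> c2 u2))"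
      using left_divides_cmul_mono[OF c(1) u'(2)] lcm2
      unfolding is_right_lcm_def common_right_multiple_def by blast
    then show "left_divides \<C> u (cmul \<C> (cmul \<C> c1 c2) u2)"
      using lcm1 left_divides_trans unfolding assoc[OF u'(3)] is_right_lcm_def common_right_multiple_def by blast
    show "left_divides \<C> (cmul \<C> c1 c2) (cmul \<C> (cmul \<C> c1 c2) u2)"
      using left_divides_cmul c12 u'(3) by blast
  next
    fix w assume w: "left_divides \<C> u w \<and> left_divides \<C> (cmul \<C> c1 c2) w"
    then obtain r where r: "r \<in> cmor \<C>" "composable \<C> (cmul \<C> c1 c2) r" "w = cmul \<C> (cmul \<C> c1 c2) r"
      unfolding left_divides_def by blast
    have c2r: "composable \<C> c2 r" "cmul \<C> c2 r \<in> cmor \<C>" "composable \<C> c1 (cmul \<C> c2 r)"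
      using r composable_cmul_left[OF c] cmul_in_cmor[OF c(2) r(1)] composable_cmul_right c
      by auto
    have "left_divides \<C> u1 (cmul \<C> c2 r)"
      using left_divides_complement[OF lcm1 c(1) u'(1) c2r(2) u'(2) c2r(3)] w r assoc by simp
    then have "left_divides \<C> u2 r"
      using left_divides_complement[OF lcm2 c(2) u'(3) r(1) u'(4) c2r(1)] by simp
    then show "left_divides \<C> (cmul \<C> (cmul \<C> c1 c2) u2) w"
      using left_divides_cmul_mono[OF c12(1)] c12(2) r(3) by blast
  qed
qed

lemma is_right_lcm_right_lcm:
  assumes c: "c \<in> cmor \<C>" and cm: "composable \<C> c a'" "composable \<C> c b'"
    and ab': "a' \<in> cmor \<C>" "b' \<in> cmor \<C>"
    and lcm_a: "is_right_lcm \<C> a c (cmul \<C> c a')"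
    and lcm_b: "is_right_lcm \<C> b c (cmul \<C> c b')"
    and lcm': "is_right_lcm \<C> a' b' m'"
    and lcm: "is_right_lcm \<C> a b m"
  shows "is_right_lcm \<C> m c (cmul \<C> c m')"
proof -
  have "left_divides \<C> a' m'"
    using lcm' unfolding is_right_lcm_def common_right_multiple_def by blast
  then have m': "m' \<in> cmor \<C>" "composable \<C> c m'"
    using is_right_lcm_in_cmor[OF lcm'] cm(1) left_divides_csrc unfolding composable_def by auto
  show ?thesis
    unfolding is_right_lcm_def common_right_multiple_def
  proof (intro conjI allI impI)
    have "left_divides \<C> (cmul \<C> c a') (cmul \<C> c m')" "left_divides \<C> (cmul \<C> c b') (cmul \<C> c m')"
      using left_divides_cmul_mono[OF c] cm lcm'
      unfolding is_right_lcm_def common_right_multiple_def by blast+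
    moreover have "left_divides \<C> a (cmul \<C> c a')" "left_divides \<C> b (cmul \<C> c b')"
      using lcm_a lcm_b unfolding is_right_lcm_def common_right_multiple_def by blast+
    ultimately have "left_divides \<C> a (cmul \<C> c m')" "left_divides \<C> b (cmul \<C> c m')"
      using left_divides_trans by blast+
    then show "left_divides \<C> m (cmul \<C> c m')"
      using lcm unfolding is_right_lcm_def common_right_multiple_def by blast
    show "left_divides \<C> c (cmul \<C> c m')"
      using left_divides_cmul c m' by blast
  next
    fix w assume w: "left_divides \<C> m w \<and> left_divides \<C> c w"
    then obtain z where z: "z \<in> cmor \<C>" "composable \<C> c z" "w = cmul \<C> c z"
      unfolding left_divides_def by blast
    have "left_divides \<C> a m" "left_divides \<C> b m"
      using lcm unfolding is_right_lcm_def common_right_multiple_def by blast+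
    then have "left_divides \<C> a w" "left_divides \<C> b w"
      using w left_divides_trans by blast+
    then have "left_divides \<C> a' z" "left_divides \<C> b' z"
      using left_divides_complement[OF lcm_a c ab'(1) z(1) cm(1) z(2)]
        left_divides_complement[OF lcm_b c ab'(2) z(1) cm(2) z(2)] z(3) by simp_all
    then have "left_divides \<C> m' z"
      using lcm' unfolding is_right_lcm_def common_right_multiple_def by blast
    then show "left_divides \<C> (cmul \<C> c m') w"
      using left_divides_cmul_mono[OF c m'(2)] z(3) by simp
  qed
qed

abbreviation generators where "generators \<equiv> J ` A \<union> cid \<C> ` L"
abbreviation E where "E \<equiv> rlcm_closure \<C> generators"

lemma jmap_in_cmor: "x \<in> A \<Longrightarrow> J x \<in> cmor \<C>"
  by (simp add: jmap_eq_word_class word_class_in_cmor_iff src_in_L)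

lemma csrc_jmap [simp]: "csrc \<C> (J x) = s x"
  and ctgt_jmap [simp]: "ctgt \<C> (J x) = t x"
  and mor_length_jmap [simp]: "mor_length (J x) = 1"
  by (simp_all add: jmap_eq_word_class)

lemma generators_in_cmor: "u \<in> generators \<Longrightarrow> u \<in> cmor \<C>"
  using jmap_in_cmor cid_in_cmor by auto

lemma E_in_cmor: "u \<in> E \<Longrightarrow> u \<in> cmor \<C>"
  by (induction rule: rlcm_closure.induct) (auto simp: generators_in_cmor is_right_lcm_in_cmor)

lemma generator_complement_atom:
  assumes u: "u \<in> generators" and x: "x \<in> A" and M: "common_right_multiple \<C> u (J x) M"
  shows "\<exists>u'\<in>generators. composable \<C> (J x) u' \<and> is_right_lcm \<C> u (J x) (cmul \<C> (J x) u')"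
proof -
  have tx: "cid \<C> (t x) \<in> generators" "composable \<C> (J x) (cid \<C> (t x))"
      "cmul \<C> (J x) (cid \<C> (t x)) = J x"
    using x tgt_in_L cmul_cid[OF jmap_in_cmor[OF x]] by (auto simp: composable_def)
  have src: "csrc \<C> u = s x"
    using common_right_multiple_csrc[OF M] by simp
  from u consider y where "y \<in> A" "u = J y" | v where "v \<in> L" "u = cid \<C> v"
    by blast
  then show ?thesis
  proof cases
    case (1 y)
    show ?thesis
    proof (cases "y = x")
      case True
      then have "is_right_lcm \<C> u (J x) (cmul \<C> (J x) (cid \<C> (t x)))"
        using is_right_lcm_if_left_divides left_divides_refl jmap_in_cmor x 1 tx(3) by simp
      then show ?thesis
        using tx by blast
    next
      case False
      have "s y = s x"
        using src 1 by simp
      then have "is_right_lcm \<C> u (J x) (cmul \<C> (J x) (J (x \<star> y)))"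
        using right_lcm_atoms(2)[OF x \<open>y \<in> A\<close>] False 1 is_right_lcm_commute by metis
      moreover have "J (x \<star> y) \<in> generators" "composable \<C> (J x) (J (x \<star> y))"
        using complement_in_A[OF x \<open>y \<in> A\<close>] src_complement[OF x \<open>y \<in> A\<close>] \<open>s y = s x\<close>
        by (auto simp: composable_def)
      ultimately show ?thesis
        by blast
    qed
  next
    case (2 v)
    then have "is_right_lcm \<C> u (J x) (cmul \<C> (J x) (cid \<C> (t x)))"
      using is_right_lcm_if_left_divides cid_left_divides[OF jmap_in_cmor[OF x]] src tx(3) by simp
    then show ?thesis
      using tx by blast
  qed
qed

lemma common_right_multiple_complement:
  assumes c: "c1 \<in> cmor \<C>" "c2 \<in> cmor \<C>" "composable \<C> c1 c2"
    and lcm: "is_right_lcm \<C> u c1 (cmul \<C> c1 u1)" "u1 \<in> cmor \<C>" "composable \<C> c1 u1"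
    and M: "common_right_multiple \<C> u (cmul \<C> c1 c2) M"
  shows "\<exists>M'. common_right_multiple \<C> u1 c2 M'"
proof -
  obtain r where r: "r \<in> cmor \<C>" "composable \<C> (cmul \<C> c1 c2) r" "M = cmul \<C> (cmul \<C> c1 c2) r"
    using M unfolding common_right_multiple_def left_divides_def by blast
  have c2r: "composable \<C> c2 r"
    using r(2) composable_cmul_left[OF c] by simp
  then have c2r: "composable \<C> c2 r" "cmul \<C> c2 r \<in> cmor \<C>" "composable \<C> c1 (cmul \<C> c2 r)"
    using cmul_in_cmor[OF c(2) r(1)] composable_cmul_right[OF c(2) r(1)] c(3) by simp_all
  have "M = cmul \<C> c1 (cmul \<C> c2 r)"
    using r(3) cmul_assoc_cmor c r(1) by simp
  then have "left_divides \<C> u1 (cmul \<C> c2 r)"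
    using left_divides_complement[OF lcm(1) c(1) lcm(2) c2r(2) lcm(3) c2r(3)] M
    unfolding common_right_multiple_def by simp
  then show ?thesis
    using left_divides_cmul[OF c(2) r(1) c2r(1)] unfolding common_right_multiple_def by blast
qed

lemma generator_complement_word_class:
  assumes "v \<in> L" "path_from v xs" "u \<in> generators"
    and "common_right_multiple \<C> u (word_class v xs) M"
  shows "\<exists>u'\<in>generators. composable \<C> (word_class v xs) u' \<and>
      is_right_lcm \<C> u (word_class v xs) (cmul \<C> (word_class v xs) u')"
  using assms
proof (induction xs arbitrary: v u M)
  case Nil
  have u: "u \<in> cmor \<C>" "csrc \<C> u = v"
    using generators_in_cmor[OF Nil.prems(3)] common_right_multiple_csrc[OF Nil.prems(4)] by simp_all
  have "is_right_lcm \<C> u (cid \<C> v) u"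
    using is_right_lcm_if_left_divides[OF cid_left_divides[OF u(1)]] is_right_lcm_commute u(2)
    by simp
  moreover have "cmul \<C> (cid \<C> v) u = u"
    using cid_cmul[OF u(1)] u(2) by simp
  ultimately show ?case
    using Nil.prems(3) u(2) unfolding cid_eq_word_class[symmetric]
    by (intro bexI[of _ u]) (simp_all add: composable_def)
next
  case (Cons x xs)
  define c' where "c' = word_class (t x) xs"
  have x: "x \<in> A" "s x = v" "path_from (t x) xs"
    using Cons.prems(2) by auto
  have Jx: "J x \<in> cmor \<C>"
    using jmap_in_cmor[OF x(1)] .
  have c': "c' \<in> cmor \<C>" "composable \<C> (J x) c'"
    unfolding c'_def using x tgt_in_L by (auto simp: word_class_in_cmor_iff composable_def)
  have c: "word_class v (x # xs) = cmul \<C> (J x) c'"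
    unfolding c'_def using x by (simp add: jmap_eq_word_class)
  have "common_right_multiple \<C> u (J x) M"
    using Cons.prems(4) left_divides_trans[OF left_divides_cmul[OF Jx c']]
    unfolding c common_right_multiple_def by blast
  from generator_complement_atom[OF Cons.prems(3) x(1) this]
  obtain u1 where u1: "u1 \<in> generators" "composable \<C> (J x) u1"
      "is_right_lcm \<C> u (J x) (cmul \<C> (J x) u1)"
    by blast
  obtain M' where "common_right_multiple \<C> u1 c' M'"
    using common_right_multiple_complement[OF Jx c' u1(3) generators_in_cmor[OF u1(1)] u1(2)]
      Cons.prems(4) unfolding c by blast
  from Cons.IH[OF tgt_in_L[OF x(1)] x(3) u1(1) this[unfolded c'_def]]
  obtain u2 where u2: "u2 \<in> generators" "composable \<C> c' u2" "is_right_lcm \<C> u1 c' (cmul \<C> c' u2)"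
    unfolding c'_def by blast
  have "is_right_lcm \<C> u (cmul \<C> (J x) c') (cmul \<C> (cmul \<C> (J x) c') u2)"
    using is_right_lcm_cmul[OF Jx c' generators_in_cmor[OF u1(1)] u1(2)
        generators_in_cmor[OF u2(1)] u2(2) u1(3) u2(3)] .
  moreover have "composable \<C> (cmul \<C> (J x) c') u2"
    using composable_cmul_left[OF Jx c'] u2(2) by simp
  ultimately show ?case
    using u2(1) c by auto
qed

lemma generator_complement:
  assumes "u \<in> generators" "c \<in> cmor \<C>" "common_right_multiple \<C> u c M"
  shows "\<exists>u'\<in>generators. composable \<C> c u' \<and> is_right_lcm \<C> u c (cmul \<C> c u')"
proof -
  obtain v xs where c: "c = word_class v xs" "v \<in> L" "path_from v xs"
    using assms(2) by (rule cmorE)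
  show ?thesis
    using generator_complement_word_class[OF c(2,3) assms(1) assms(3)[unfolded c(1)]] c(1) by simp
qed

lemma E_complement:
  assumes "u \<in> E" "c \<in> cmor \<C>" "common_right_multiple \<C> u c M"
  shows "\<exists>u'\<in>E. composable \<C> c u' \<and> is_right_lcm \<C> u c (cmul \<C> c u')"
  using assms(1,3)
proof (induction arbitrary: M rule: rlcm_closure.induct)
  case (base u)
  from generator_complement[OF base.hyps assms(2) base.prems]
  obtain u' where "u' \<in> generators" "composable \<C> c u'" "is_right_lcm \<C> u c (cmul \<C> c u')"
    by blast
  then show ?case
    using rlcm_closure.base[OF \<open>u' \<in> generators\<close>] by blast
next
  case (lcm a b m)
  have am: "left_divides \<C> a m" "left_divides \<C> b m"
    using lcm.hyps(3) unfolding is_right_lcm_def common_right_multiple_def by auto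
  have M: "left_divides \<C> m M" "left_divides \<C> c M"
    using lcm.prems unfolding common_right_multiple_def by auto
  obtain a' where a': "a' \<in> E" "composable \<C> c a'" "is_right_lcm \<C> a c (cmul \<C> c a')"
    using lcm.IH(1)[of M] left_divides_trans[OF am(1) M(1)] M(2)
    unfolding common_right_multiple_def by blast
  obtain b' where b': "b' \<in> E" "composable \<C> c b'" "is_right_lcm \<C> b c (cmul \<C> c b')"
    using lcm.IH(2)[of M] left_divides_trans[OF am(2) M(1)] M(2)
    unfolding common_right_multiple_def by blast
  obtain z where z: "z \<in> cmor \<C>" "composable \<C> c z" "M = cmul \<C> c z"
    using M(2) unfolding left_divides_def by blast
  have "left_divides \<C> a' z" "left_divides \<C> b' z"
    using left_divides_complement[OF a'(3) assms(2) E_in_cmor[OF a'(1)] z(1) a'(2) z(2)]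
      left_divides_complement[OF b'(3) assms(2) E_in_cmor[OF b'(1)] z(1) b'(2) z(2)]
      left_divides_trans[OF am(1) M(1)] left_divides_trans[OF am(2) M(1)] z(3) by simp_all
  then obtain m' where m': "is_right_lcm \<C> a' b' m'"
    using right_lcm_exists E_in_cmor a'(1) b'(1) unfolding common_right_multiple_def by blast
  have "left_divides \<C> a' m'"
    using m' unfolding is_right_lcm_def common_right_multiple_def by blast
  then have "composable \<C> c m'"
    using a'(2) left_divides_csrc unfolding composable_def by simp
  moreover have "m' \<in> E"
    using rlcm_closure.lcm[OF a'(1) b'(1) m'] .
  moreover have "is_right_lcm \<C> m c (cmul \<C> c m')"
    using is_right_lcm_right_lcm[OF assms(2) a'(2) b'(2) E_in_cmor[OF a'(1)] E_in_cmor[OF b'(1)]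
        a'(3) b'(3) m' lcm.hyps(3)] .
  ultimately show ?case
    by blast
qed

text \<open>The right-lcm of \<open>u\<close> and \<open>h\<close> is again a divisor of \<open>m\<close> in \<open>E\<close>, hence no longer than \<open>h\<close>.\<close>
lemma left_divides_longest_E_divisor:
  assumes h: "h \<in> E" "left_divides \<C> h m"
    and longest: "\<And>u. u \<in> E \<Longrightarrow> left_divides \<C> u m \<Longrightarrow> mor_length u \<le> mor_length h"
    and u: "u \<in> E" "left_divides \<C> u m"
  shows "left_divides \<C> u h"
proof -
  obtain l where l: "is_right_lcm \<C> u h l"
    using right_lcm_exists E_in_cmor u h unfolding common_right_multiple_def by blast
  have "left_divides \<C> l m"
    using l u(2) h(2) unfolding is_right_lcm_def common_right_multiple_def by blast
  then have "mor_length l \<le> mor_length h"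
    using longest rlcm_closure.lcm[OF u(1) h(1) l] by blast
  moreover have "left_divides \<C> h l"
    using l unfolding is_right_lcm_def common_right_multiple_def by blast
  ultimately have "h = l"
    using left_divides_mor_length left_divides_mor_length_eq by fastforce
  then show ?thesis
    using l unfolding is_right_lcm_def common_right_multiple_def by blast
qed

lemma E_head_exists:
  assumes m: "m \<in> cmor \<C>"
  shows "\<exists>h\<in>E. left_divides \<C> h m \<and> (\<forall>u\<in>E. left_divides \<C> u m \<longrightarrow> left_divides \<C> u h) \<and>
    (0 < mor_length m \<longrightarrow> 0 < mor_length h)"
proof -
  define P where "P k \<longleftrightarrow> (\<exists>u\<in>E. left_divides \<C> u m \<and> mor_length u = k)" for k
  have "cid \<C> (csrc \<C> m) \<in> E" "left_divides \<C> (cid \<C> (csrc \<C> m)) m"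
      "mor_length (cid \<C> (csrc \<C> m)) = 0"
    using csrc_in_L[OF m] cid_left_divides[OF m] by (auto intro: rlcm_closure.base simp: cid_eq_word_class)
  then have "P 0"
    unfolding P_def by blast
  moreover have "\<forall>k. P k \<longrightarrow> k \<le> mor_length m"
    unfolding P_def using left_divides_mor_length by blast
  ultimately obtain k where k: "P k" "\<forall>k'. P k' \<longrightarrow> k' \<le> k"
    using Nat.ex_has_greatest_nat by blast
  then obtain h where h: "h \<in> E" "left_divides \<C> h m" "mor_length h = k"
    unfolding P_def by blast
  have "\<forall>u\<in>E. left_divides \<C> u m \<longrightarrow> left_divides \<C> u h"
    using left_divides_longest_E_divisor[OF h(1,2)] k(2) h(3) unfolding P_def by blast
  moreover have "0 < mor_length h" if "0 < mor_length m"
  proof -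
    obtain v x xs where "m = word_class v (x # xs)" "v \<in> L" "path_from v (x # xs)"
      using m \<open>0 < mor_length m\<close> by (metis cmorE length_greater_0_conv list.exhaust mor_length_word_class)
    then have "left_divides \<C> (J x) m" "x \<in> A"
      using left_divides_word_class_iff[of v "[x]"] by (auto simp: jmap_eq_word_class)
    moreover have "J x \<in> E"
      using \<open>x \<in> A\<close> by (blast intro: rlcm_closure.base)
    ultimately have "P 1"
      unfolding P_def using mor_length_jmap by blast
    then show ?thesis
      using k(2) h(3) by fastforce
  qed
  ultimately have "left_divides \<C> h m \<and> (\<forall>u\<in>E. left_divides \<C> u m \<longrightarrow> left_divides \<C> u h) \<and>
      (0 < mor_length m \<longrightarrow> 0 < mor_length h)"
    using h(2) by blast
  then show ?thesis
    by (rule bexI[OF _ h(1)])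
qed

lemma greedy_E:
  assumes h: "h \<in> cmor \<C>" "y \<in> cmor \<C>" "composable \<C> h y"
    and head: "\<forall>u\<in>E. left_divides \<C> u (cmul \<C> h y) \<longrightarrow> left_divides \<C> u h"
  shows "greedy \<C> E h y"
  unfolding greedy_def
proof (intro ballI impI)
  fix u c assume u: "u \<in> E" and c: "c \<in> cmor \<C>" "composable \<C> c h"
    and div: "left_divides \<C> u (cmul \<C> (cmul \<C> c h) y)"
  define p where "p = cmul \<C> h y"
  have p: "p \<in> cmor \<C>" "composable \<C> c p" "cmul \<C> (cmul \<C> c h) y = cmul \<C> c p"
    unfolding p_def using cmul_in_cmor[OF h] composable_cmul_right[OF h(1,2)] c h cmul_assoc_cmor
    by auto
  have "common_right_multiple \<C> u c (cmul \<C> c p)"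
    using div p left_divides_cmul[OF c(1) p(1,2)] unfolding common_right_multiple_def by simp
  then obtain u' where u': "u' \<in> E" "composable \<C> c u'" "is_right_lcm \<C> u c (cmul \<C> c u')"
    using E_complement[OF u c(1)] by blast
  have "left_divides \<C> u' p"
    using left_divides_complement[OF u'(3) c(1) E_in_cmor[OF u'(1)] p(1) u'(2) p(2)] div p(3) by simp
  then have "left_divides \<C> (cmul \<C> c u') (cmul \<C> c h)"
    using head u'(1) left_divides_cmul_mono[OF c(1) u'(2)] unfolding p_def by blast
  then show "left_divides \<C> u (cmul \<C> c h)"
    using u'(3) left_divides_trans unfolding is_right_lcm_def common_right_multiple_def by blast
qed

lemma normal_path_Cons:
  "normal_path \<C> S (x # xs) \<longleftrightarrow> x \<in> cmor \<C> \<and> x \<in> sharp \<C> S \<and> normal_path \<C> S xs \<and>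
     (xs \<noteq> [] \<longrightarrow> composable \<C> x (hd xs) \<and> greedy \<C> S x (hd xs))"
  unfolding normal_path_def is_chain_def successively_conv_nth[symmetric]
  by (auto simp: successively_Cons)

lemma mem_sharp:
  assumes "x \<in> cmor \<C>" "x \<in> S"
  shows "x \<in> sharp \<C> S"
proof -
  have "invertible \<C> (cid \<C> (ctgt \<C> x))" "composable \<C> x (cid \<C> (ctgt \<C> x))"
    using cid_in_cmor[OF ctgt_in_L[OF assms(1)]]
    by (simp_all add: invertible_iff_mor_length_0 cid_eq_word_class composable_def)
  then show ?thesis
    unfolding sharp_def using cmul_cid[OF assms(1)] assms(2) by force
qed

theorem E_normal_form:
  "m \<in> cmor \<C> \<Longrightarrow> \<exists>xs. xs \<noteq> [] \<and> normal_path \<C> E xs \<and> list_prod \<C> xs = m"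
proof (induction "mor_length m" arbitrary: m rule: less_induct)
  case less
  show ?case
  proof (cases "mor_length m = 0")
    case True
    then have "m \<in> sharp \<C> E"
      using invertible_iff_mor_length_0 less.prems unfolding sharp_def by blast
    then show ?thesis
      using less.prems by (intro exI[of _ "[m]"]) (simp add: normal_path_def is_chain_def list_prod_def)
  next
    case False
    then obtain h where h: "h \<in> E" "left_divides \<C> h m"
        "\<forall>u\<in>E. left_divides \<C> u m \<longrightarrow> left_divides \<C> u h" "0 < mor_length h"
      using E_head_exists[OF less.prems] by blast
    have hm: "h \<in> cmor \<C>"
      using E_in_cmor[OF h(1)] .
    obtain m' where m': "m' \<in> cmor \<C>" "composable \<C> h m'" "m = cmul \<C> h m'"
      using h(2) unfolding left_divides_def by blast
    have "mor_length m' < mor_length m"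
      using mor_length_cmul[OF hm m'(1)] m'(3) h(4) by simp
    then obtain ys where ys: "ys \<noteq> []" "normal_path \<C> E ys" "list_prod \<C> ys = m'"
      using less.hyps m'(1) by blast
    have chain: "is_chain \<C> ys"
      using ys(2) unfolding normal_path_def by blast
    note prod = list_prod_chain[OF chain ys(1)]
    have y: "hd ys \<in> cmor \<C>" "composable \<C> h (hd ys)"
      using chain ys m'(2) prod unfolding is_chain_def composable_def by (cases ys; auto)+
    have "left_divides \<C> (cmul \<C> h (hd ys)) m"
      using left_divides_cmul_mono[OF hm y(2)] prod ys(3) m'(3) by simp
    then have "greedy \<C> E h (hd ys)"
      using greedy_E[OF hm y] h(3) left_divides_trans by blast
    then have "normal_path \<C> E (h # ys)"
      using normal_path_Cons hm mem_sharp[OF hm h(1)] ys y by blast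
    moreover have "list_prod \<C> (h # ys) = m"
      using list_prod_Cons[OF ys(1)] is_word_class_if_cmor hm chain ys(3) m'(3)
      unfolding is_chain_def by (metis subsetD)
    ultimately show ?thesis
      by blast
  qed
qed

lemma normal_path_head_left_divides:
  assumes "normal_path \<C> S xs" "xs \<noteq> []" "u \<in> S" "c \<in> cmor \<C>" "composable \<C> c (hd xs)"
    and "left_divides \<C> u (cmul \<C> c (list_prod \<C> xs))"
  shows "left_divides \<C> u (cmul \<C> c (hd xs))"
  using assms
proof (induction xs arbitrary: c)
  case (Cons x xs)
  show ?case
  proof (cases "xs = []")
    case True
    then show ?thesis
      using Cons.prems(6) by (simp add: list_prod_def)
  next
    case False
    have x: "x \<in> cmor \<C>" "normal_path \<C> S xs" "composable \<C> x (hd xs)" "greedy \<C> S x (hd xs)"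
      using Cons.prems(1) False normal_path_Cons by auto
    have chain: "is_chain \<C> xs"
      using x(2) unfolding normal_path_def by blast
    note prod = list_prod_chain[OF chain False]
    have cx: "cmul \<C> c x \<in> cmor \<C>" "composable \<C> (cmul \<C> c x) (hd xs)"
      using cmul_in_cmor[OF Cons.prems(4) x(1)] composable_cmul_left[OF Cons.prems(4) x(1)] Cons.prems(5) x(3)
      by simp_all
    have "list_prod \<C> (x # xs) = cmul \<C> x (list_prod \<C> xs)"
      using list_prod_Cons[OF False] is_word_class_if_cmor x(1) chain unfolding is_chain_def by blast
    then have "cmul \<C> c (list_prod \<C> (x # xs)) = cmul \<C> (cmul \<C> c x) (list_prod \<C> xs)"
      using cmul_assoc_cmor Cons.prems(4) x(1) prod by simp
    then have "left_divides \<C> u (cmul \<C> (cmul \<C> c x) (hd xs))"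
      using Cons.IH[OF x(2) False Cons.prems(3) cx] Cons.prems(6) by simp
    then show ?thesis
      using x(4) Cons.prems(3,4,5) unfolding greedy_def by simp
  qed
qed simp

lemma sharp_subset:
  assumes "S \<subseteq> cmor \<C>"
  shows "sharp \<C> S \<subseteq> S \<union> cid \<C> ` L"
proof
  fix x assume "x \<in> sharp \<C> S"
  then consider y e where "x = cmul \<C> y e" "y \<in> S" "invertible \<C> e" "composable \<C> y e"
    | "invertible \<C> x"
    unfolding sharp_def by blast
  then show "x \<in> S \<union> cid \<C> ` L"
  proof cases
    case 1
    obtain w where "e = cid \<C> w"
      using invertible_imp_identity[OF 1(3)] unfolding is_identity_def by blast
    then have "e = cid \<C> (ctgt \<C> y)"
      using 1(4) unfolding composable_def by simp
    then show ?thesis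
      using 1 cmul_cid assms by auto
  next
    case 2
    then show ?thesis
      using invertible_imp_identity unfolding is_identity_def by auto
  qed
qed

lemma E_subset_garside_family:
  assumes S: "garside_family \<C> S" "J ` A \<subseteq> S" "cid \<C> ` L \<subseteq> S"
  shows "E \<subseteq> S"
proof
  fix x assume "x \<in> E"
  then show "x \<in> S"
  proof (induction rule: rlcm_closure.induct)
    case (base x)
    then show ?case
      using S(2,3) by blast
  next
    case (lcm a b m)
    have m: "m \<in> cmor \<C>"
      using is_right_lcm_in_cmor[OF lcm.hyps(3)] .
    then obtain xs where xs: "xs \<noteq> []" "normal_path \<C> S xs" "list_prod \<C> xs = m"
      using S(1) unfolding garside_family_def by blast
    have chain: "is_chain \<C> xs"
      using xs(2) unfolding normal_path_def by blast
    note prod = list_prod_chain[OF chain xs(1)]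
    have hd: "hd xs \<in> cmor \<C>"
      using chain xs(1) unfolding is_chain_def by (cases xs) auto
    define c where "c = cid \<C> (csrc \<C> m)"
    have c: "c \<in> cmor \<C>" "composable \<C> c (hd xs)" "cmul \<C> c m = m" "cmul \<C> c (hd xs) = hd xs"
      unfolding c_def using cid_in_cmor[OF csrc_in_L[OF m]] cid_cmul[OF m] cid_cmul[OF hd] prod xs(3)
      by (simp_all add: composable_def)
    have "left_divides \<C> a (hd xs)" "left_divides \<C> b (hd xs)"
      using normal_path_head_left_divides[OF xs(2,1) _ c(1,2)] lcm.IH c(3,4) xs(3) lcm.hyps(3)
      unfolding is_right_lcm_def common_right_multiple_def by simp_all
    then have "left_divides \<C> m (hd xs)"
      using lcm.hyps(3) unfolding is_right_lcm_def common_right_multiple_def by blast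
    then have "m = hd xs"
      using left_divides_antisym prod xs(3) by blast
    have "hd xs \<in> sharp \<C> S"
      using xs(2) hd_in_set[OF xs(1)] unfolding normal_path_def by blast
    moreover have "S \<subseteq> cmor \<C>"
      using S(1) unfolding garside_family_def by blast
    ultimately have "hd xs \<in> S \<union> cid \<C> ` L"
      using sharp_subset by blast
    then show ?case
      using \<open>m = hd xs\<close> S(2,3) by blast
  qed
qed

theorem garside_family_E: "garside_family \<C> E"
  unfolding garside_family_def using E_in_cmor E_normal_form by blast

end

theorem theorem5p7:
  fixes L :: "'v set" and A :: "'a set" and s t :: "'a \<Rightarrow> 'v"
    and \<sigma> :: "'a \<times> 'a \<Rightarrow> 'a \<times> 'a"
  assumes "L \<noteq> {}"
    and "yang_baxter_map L A s t \<sigma>"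
    and "involutive A s t \<sigma>"
    and "left_nondegenerate A s t \<sigma>"
  defines "C \<equiv> structure_cat L A s t \<sigma>"
    and "j \<equiv> jmap A s t \<sigma>"
    and "star \<equiv> star_op A s t \<sigma>"
  shows "inj_on j A
    \<and> (\<forall>P Q. valid_path L A s t P \<longrightarrow> valid_path L A s t Q \<longrightarrow>
          (path_equiv A s t \<sigma> P Q \<longleftrightarrow> (star_step A s t \<sigma>)\<^sup>*\<^sup>* P Q))
    \<and> (\<exists>K::real. \<forall>P Q. valid_path L A s t P \<longrightarrow> valid_path L A s t Q \<longrightarrow>
          path_equiv A s t \<sigma> P Q \<longrightarrow>
          (\<exists>n. (star_step A s t \<sigma> ^^ n) P Q \<and>
               real n \<le> K * (real (length (snd P) + length (snd Q)))\<^sup>2))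
    \<and> (\<forall>x. invertible C x \<longrightarrow> is_identity C x)
    \<and> left_cancellative C
    \<and> unique_conditional_right_lcms C
    \<and> (\<forall>x\<in>A. \<forall>y\<in>A. x \<noteq> y \<and> s x = s y \<longrightarrow>
          cmul C (j x) (j (star x y)) = cmul C (j y) (j (star y x)) \<and>
          is_right_lcm C (j x) (j y) (cmul C (j x) (j (star x y))))
    \<and> noetherian C
    \<and> {x. atom C x} = j ` A
    \<and> (let E = rlcm_closure C (j ` A \<union> cid C ` L) in
          garside_family C E \<and> j ` A \<subseteq> E \<and> cid C ` L \<subseteq> E \<and>
          (\<forall>S. garside_family C S \<and> j ` A \<subseteq> S \<and> cid C ` L \<subseteq> S \<longrightarrow> E \<subseteq> S))"
proof -
  interpret involutive_ybm L A s t \<sigma>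
    using assms(2-4) by unfold_locales
  show ?thesis
    unfolding C_def j_def star_def Let_def
  proof (intro conjI)
    show "\<forall>P Q. valid_path L A s t P \<longrightarrow> valid_path L A s t Q \<longrightarrow>
        (path_equiv A s t \<sigma> P Q \<longleftrightarrow> (star_step A s t \<sigma>)\<^sup>*\<^sup>* P Q)"
      using path_equiv_iff_star_steps by blast
    show "\<forall>x. invertible \<C> x \<longrightarrow> is_identity \<C> x"
      using invertible_imp_identity by blast
    show "\<forall>x\<in>A. \<forall>y\<in>A. x \<noteq> y \<and> s x = s y \<longrightarrow>
        cmul \<C> (J x) (J (x \<star> y)) = cmul \<C> (J y) (J (y \<star> x)) \<and>
        is_right_lcm \<C> (J x) (J y) (cmul \<C> (J x) (J (x \<star> y)))"
      using right_lcm_atoms by blast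
    show "J ` A \<subseteq> E" "cid \<C> ` L \<subseteq> E"
      by (auto intro: rlcm_closure.base)
    show "\<forall>S. garside_family \<C> S \<and> J ` A \<subseteq> S \<and> cid \<C> ` L \<subseteq> S \<longrightarrow> E \<subseteq> S"
      by (simp add: E_subset_garside_family)
  qed (fact inj_on_jmap quadratic_isoperimetric_inequality left_cancellative_C
      unique_conditional_right_lcms_C noetherian_C atoms_C garside_family_E)+
qed

end
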